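(* There exists a unique pointwise minimal pair of maps $t\mapsto\sigma_P(t)$, $P\in\{1,2\}$, assigning to every well-formed tree $t$ over $\tilde A_{i,k}$ a $P$-signature $\sigma_P(t)$, such that for every player $P$, all well-formed trees $t,t_L,t_R$ and all $j\in\{i,\ldots,k\}$: (1) $\sigma_P(t)=\infty$ iff $P$ does not win $\mathcal G(t)$; (2) $\sigma_P(\sim(t))=(0,\ldots,0)$ if $P$ wins $\mathcal G(\sim(t))$; (3) if $\sigma_P(t)=(\theta_{i'},\ldots,\theta_{k'})$ and $j$ is $P$-winning, then $\sigma_P(p_j(t))=(\theta_{i'},\ldots,\theta_{j-1},0,\ldots,0)$ (coordinates with index $<j$ kept, the others $0$); (4) if $\sigma_P(t)=(\theta_{i'},\ldots,\theta_{k'})$ and $j$ is $P$-losing, then $\sigma_P(p_j(t))=(\theta_{i'},\ldots,\theta_{j-2},\theta_j+1,0,\ldots,0)$; (5) $\sigma_P(c_P(t_L,t_R))=\min\{\sigma_P(t_L),\sigma_P(t_R)\}$; (6) $\sigma_P(c_{\bar P}(t_L,t_R))=\max\{\sigma_P(t_L),\sigma_P(t_R)\}$. Pointwise minimal means: for every pair $(\sigma'_1,\sigma'_2)$ satisfying (1)–(6), every $P$ and every well-formed $t$, $\sigma_P(t)\le_{lex}\sigma'_P(t)$.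
   Context: Fix natural numbers $i<k$. Trees over a ranked alphabet are partial maps $t:\omega^*\to A$ with non-empty prefix-closed domain where a node with an $m$-ary label has exactly the children $u0,\ldots,u(m-1)$; $a(t_0,\ldots,t_{m-1})$ is the tree with root label $a$ and children subtrees $t_0,\ldots$. The alphabet $\tilde A_{i,k}$ has unary letters $p_i,\ldots,p_k$, a unary letter $\sim$, and binary letters $c_1,c_2$. Players are $1,2$; $\bar P$ is the opponent of $P$. A tree $t$ is well-formed if no branch has infinitely many $\sim$. A node $u$ is switched if an odd number of strict prefixes $w\prec u$ have $t(w)=\sim$, kept otherwise. The game $\mathcal G(t)$: positions are nodes, moves to children, start at the root; $u$ is controlled by $P$ iff ($u$ kept and $t(u)=c_P$) or ($u$ switched and $t(u)=c_{\bar P}$). An infinite play (branch), which is eventually kept or eventually switched, is won by player 1 iff it is kept and the least $j$ with infinitely many nodes labelled $p_j$ is even, or it is switched and this $j$ is odd (if no priority letter occurs infinitely often take $j=k$). $P$ wins $\mathcal G(t)$ if $P$ has a winning strategy. A number $j\in\{i,\ldots,k\}$ is $P$-losing if it is odd (for $P=1$) resp. even (for $P=2$), and $P$-winning otherwise; $i',k'$ denote the least and largest $P$-losing numbers. A $P$-signature is either $\infty$ or a tuple $(\theta_{i'},\theta_{i'+2},\ldots,\theta_{k'})$ of countable ordinals indexed by the $P$-losing numbers; tuples are ordered lexicographically ($\le_{lex}$) with smaller indices more significant, and $\infty$ is the largest element. *)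

theory Defs
  imports Main
begin

text \<open>Countable ordinals are represented as isomorphism classes of well-orders
whose field is a subset of the natural numbers.\<close>

definition ord_iso_nat :: "nat rel \<Rightarrow> nat rel \<Rightarrow> bool" where
  "ord_iso_nat r s \<longleftrightarrow> (r, s) \<in> ordIso"

lemma part_equivp_ord_iso_nat: "part_equivp ord_iso_nat"
proof (rule part_equivpI)
  show "\<exists>x. ord_iso_nat x x"
    using ordIso_reflexive[OF natLeq_Well_order] unfolding ord_iso_nat_def by blast
  show "symp ord_iso_nat"
    unfolding symp_def ord_iso_nat_def using ordIso_symmetric by blast
  show "transp ord_iso_nat"
    unfolding transp_def ord_iso_nat_def using ordIso_transitive by blast
qed

quotient_type cord = "nat rel" / partial: ord_iso_nat
  by (rule part_equivp_ord_iso_nat)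

lift_definition cord_le :: "cord \<Rightarrow> cord \<Rightarrow> bool" is "\<lambda>r s. (r, s) \<in> ordLeq"
  unfolding ord_iso_nat_def
  by (meson ordIso_ordLeq_trans ordLeq_ordIso_trans ordIso_symmetric)

definition cord_less :: "cord \<Rightarrow> cord \<Rightarrow> bool" where
  "cord_less a b \<longleftrightarrow> cord_le a b \<and> \<not> cord_le b a"

definition cord_zero :: cord where
  "cord_zero = (THE z. \<forall>x. cord_le z x)"

definition cord_succ :: "cord \<Rightarrow> cord" where
  "cord_succ a = (THE s. cord_less a s \<and> (\<forall>x. cord_less a x \<longrightarrow> cord_le s x))"

datatype player = P1 | P2

fun opp :: "player \<Rightarrow> player" where
  "opp P1 = P2" | "opp P2 = P1"

text \<open>Letters: \<open>Pr j\<close> is the priority letter p_j, \<open>Sim\<close> is \<open>\<sim>\<close>, \<open>C1\<close>, \<open>C2\<close> are c_1, c_2.\<close>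
datatype lab = Pr nat | Sim | C1 | C2

fun cP :: "player \<Rightarrow> lab" where
  "cP P1 = C1" | "cP P2 = C2"

fun arity :: "lab \<Rightarrow> nat" where
  "arity (Pr _) = 1" | "arity Sim = 1" | "arity C1 = 2" | "arity C2 = 2"

definition in_alph :: "nat \<Rightarrow> nat \<Rightarrow> lab \<Rightarrow> bool" where
  "in_alph i k a \<longleftrightarrow> (\<forall>j. a = Pr j \<longrightarrow> i \<le> j \<and> j \<le> k)"

type_synonym tree = "nat list \<Rightarrow> lab option"

definition is_tree :: "nat \<Rightarrow> nat \<Rightarrow> tree \<Rightarrow> bool" where
  "is_tree i k t \<longleftrightarrow>
     t [] \<noteq> None \<and>
     (\<forall>u n. t (u @ [n]) \<noteq> None \<longrightarrow> t u \<noteq> None) \<and>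
     (\<forall>u a. t u = Some a \<longrightarrow> in_alph i k a \<and> (\<forall>n. t (u @ [n]) \<noteq> None \<longleftrightarrow> n < arity a))"

definition unary :: "lab \<Rightarrow> tree \<Rightarrow> tree" where
  "unary a t = (\<lambda>u. case u of [] \<Rightarrow> Some a | n # v \<Rightarrow> (if n = 0 then t v else None))"

definition binary :: "lab \<Rightarrow> tree \<Rightarrow> tree \<Rightarrow> tree" where
  "binary a tL tR = (\<lambda>u. case u of [] \<Rightarrow> Some a
       | n # v \<Rightarrow> (if n = 0 then tL v else if n = 1 then tR v else None))"

text \<open>Branches are given by direction sequences; \<open>pref b m\<close> is the node at depth m.\<close>
definition pref :: "(nat \<Rightarrow> nat) \<Rightarrow> nat \<Rightarrow> nat list" where
  "pref b m = map b [0..<m]"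

definition is_branch :: "tree \<Rightarrow> (nat \<Rightarrow> nat) \<Rightarrow> bool" where
  "is_branch t b \<longleftrightarrow> (\<forall>m. t (pref b m) \<noteq> None)"

definition well_formed :: "nat \<Rightarrow> nat \<Rightarrow> tree \<Rightarrow> bool" where
  "well_formed i k t \<longleftrightarrow> is_tree i k t \<and>
     (\<forall>b. is_branch t b \<longrightarrow> finite {m. t (pref b m) = Some Sim})"

definition switched :: "tree \<Rightarrow> nat list \<Rightarrow> bool" where
  "switched t u \<longleftrightarrow> odd (card {m. m < length u \<and> t (take m u) = Some Sim})"

definition controls :: "tree \<Rightarrow> player \<Rightarrow> nat list \<Rightarrow> bool" where
  "controls t P u \<longleftrightarrow> (\<not> switched t u \<and> t u = Some (cP P)) \<or> (switched t u \<and> t u = Some (cP (opp P)))"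

definition min_inf_prio :: "nat \<Rightarrow> tree \<Rightarrow> (nat \<Rightarrow> nat) \<Rightarrow> nat" where
  "min_inf_prio k t b =
     (if \<exists>j. infinite {m. t (pref b m) = Some (Pr j)}
      then (LEAST j. infinite {m. t (pref b m) = Some (Pr j)}) else k)"

definition eventually_switched :: "tree \<Rightarrow> (nat \<Rightarrow> nat) \<Rightarrow> bool" where
  "eventually_switched t b \<longleftrightarrow> (\<exists>N. \<forall>m\<ge>N. switched t (pref b m))"

definition wins_play :: "nat \<Rightarrow> tree \<Rightarrow> player \<Rightarrow> (nat \<Rightarrow> nat) \<Rightarrow> bool" where
  "wins_play k t P b \<longleftrightarrow>
     ((if eventually_switched t b then odd (min_inf_prio k t b) else even (min_inf_prio k t b))
      \<longleftrightarrow> P = P1)"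

definition strategy :: "tree \<Rightarrow> player \<Rightarrow> (nat list \<Rightarrow> nat) \<Rightarrow> bool" where
  "strategy t P s \<longleftrightarrow> (\<forall>u. t u \<noteq> None \<and> controls t P u \<longrightarrow> t (u @ [s u]) \<noteq> None)"

definition consistent :: "tree \<Rightarrow> player \<Rightarrow> (nat list \<Rightarrow> nat) \<Rightarrow> (nat \<Rightarrow> nat) \<Rightarrow> bool" where
  "consistent t P s b \<longleftrightarrow> (\<forall>m. controls t P (pref b m) \<longrightarrow> b m = s (pref b m))"

definition wins :: "nat \<Rightarrow> tree \<Rightarrow> player \<Rightarrow> bool" where
  "wins k t P \<longleftrightarrow> (\<exists>s. strategy t P s \<and>
      (\<forall>b. is_branch t b \<and> consistent t P s b \<longrightarrow> wins_play k t P b))"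

definition losing :: "player \<Rightarrow> nat \<Rightarrow> bool" where
  "losing P j \<longleftrightarrow> (if P = P1 then odd j else even j)"

text \<open>A P-signature: \<open>None\<close> is \<open>\<infinity>\<close>; \<open>Some \<theta>\<close> is the tuple \<open>(\<theta>_j)\<close> indexed by the
P-losing \<open>j \<in> {i..k}\<close>, with all other entries fixed to 0 (so the representation is unique).\<close>
type_synonym sig = "(nat \<Rightarrow> cord) option"

definition valid_sig :: "nat \<Rightarrow> nat \<Rightarrow> player \<Rightarrow> sig \<Rightarrow> bool" where
  "valid_sig i k P s \<longleftrightarrow> (\<forall>\<theta>. s = Some \<theta> \<longrightarrow>
      (\<forall>j. \<not> (i \<le> j \<and> j \<le> k \<and> losing P j) \<longrightarrow> \<theta> j = cord_zero))"

definition zero_sig :: "nat \<Rightarrow> cord" where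
  "zero_sig = (\<lambda>_. cord_zero)"

definition lex_less :: "(nat \<Rightarrow> cord) \<Rightarrow> (nat \<Rightarrow> cord) \<Rightarrow> bool" where
  "lex_less f g \<longleftrightarrow> (\<exists>l. cord_less (f l) (g l) \<and> (\<forall>l'<l. f l' = g l'))"

fun sig_le :: "sig \<Rightarrow> sig \<Rightarrow> bool" where
  "sig_le _ None = True"
| "sig_le None (Some _) = False"
| "sig_le (Some f) (Some g) = (f = g \<or> lex_less f g)"

definition sig_min :: "sig \<Rightarrow> sig \<Rightarrow> sig" where
  "sig_min a b = (if sig_le a b then a else b)"

definition sig_max :: "sig \<Rightarrow> sig \<Rightarrow> sig" where
  "sig_max a b = (if sig_le a b then b else a)"

definition reset_from :: "nat \<Rightarrow> (nat \<Rightarrow> cord) \<Rightarrow> (nat \<Rightarrow> cord)" where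
  "reset_from j \<theta> = (\<lambda>l. if l < j then \<theta> l else cord_zero)"

definition incr_at :: "nat \<Rightarrow> (nat \<Rightarrow> cord) \<Rightarrow> (nat \<Rightarrow> cord)" where
  "incr_at j \<theta> = (\<lambda>l. if l < j then \<theta> l else if l = j then cord_succ (\<theta> j) else cord_zero)"

definition sig_conditions :: "nat \<Rightarrow> nat \<Rightarrow> (player \<Rightarrow> tree \<Rightarrow> sig) \<Rightarrow> bool" where
  "sig_conditions i k \<sigma> \<longleftrightarrow>
    (\<forall>P t. well_formed i k t \<longrightarrow> valid_sig i k P (\<sigma> P t)) \<and>
    (\<forall>P t. well_formed i k t \<longrightarrow> (\<sigma> P t = None \<longleftrightarrow> \<not> wins k t P)) \<and>
    (\<forall>P t. well_formed i k t \<longrightarrow> wins k (unary Sim t) P \<longrightarrow> \<sigma> P (unary Sim t) = Some zero_sig) \<and>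
    (\<forall>P t j \<theta>. well_formed i k t \<longrightarrow> i \<le> j \<longrightarrow> j \<le> k \<longrightarrow> \<not> losing P j \<longrightarrow>
        \<sigma> P t = Some \<theta> \<longrightarrow> \<sigma> P (unary (Pr j) t) = Some (reset_from j \<theta>)) \<and>
    (\<forall>P t j \<theta>. well_formed i k t \<longrightarrow> i \<le> j \<longrightarrow> j \<le> k \<longrightarrow> losing P j \<longrightarrow>
        \<sigma> P t = Some \<theta> \<longrightarrow> \<sigma> P (unary (Pr j) t) = Some (incr_at j \<theta>)) \<and>
    (\<forall>P tL tR. well_formed i k tL \<longrightarrow> well_formed i k tR \<longrightarrow>
        \<sigma> P (binary (cP P) tL tR) = sig_min (\<sigma> P tL) (\<sigma> P tR)) \<and>
    (\<forall>P tL tR. well_formed i k tL \<longrightarrow> well_formed i k tR \<longrightarrow>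
        \<sigma> P (binary (cP (opp P)) tL tR) = sig_max (\<sigma> P tL) (\<sigma> P tR))"

definition pointwise_minimal :: "nat \<Rightarrow> nat \<Rightarrow> (player \<Rightarrow> tree \<Rightarrow> sig) \<Rightarrow> bool" where
  "pointwise_minimal i k \<sigma> \<longleftrightarrow> sig_conditions i k \<sigma> \<and>
     (\<forall>\<sigma>'. sig_conditions i k \<sigma>' \<longrightarrow>
        (\<forall>P t. well_formed i k t \<longrightarrow> sig_le (\<sigma> P t) (\<sigma>' P t)))"

end

theory Submission
  imports Defs "HOL-Library.Countable" "HOL-Library.Infinite_Set"
begin

text \<open>Read conditions (2)--(6) as a recursion on the root label: they define a monotone operator
  on maps from trees to signatures, with condition (1) built in.  Signatures that are
  supported on the bounded set of \<open>P\<close>-losing numbers are well-ordered lexicographically, so the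
  pointwise infimum of all pre-fixed points is again one and, by the Knaster--Tarski argument, the
  least fixed point.  Every solution of (1)--(6) is a fixed point, so this least fixed point is the
  pointwise minimal solution, and antisymmetry makes it unique.  The only real work is condition (1)
  for it: when \<open>P\<close> wins with a strategy \<open>s\<close>, ranks give a pre-fixed point that is finite at the root.
  For a \<open>P\<close>-losing \<open>j\<close>, the relation "the play continues along \<open>s\<close>, passes no \<open>\<sim>\<close>, sees only
  priorities \<open>\<ge> j\<close> and visits \<open>j\<close>" is well-founded, because an infinite chain in it would be a play
  consistent with \<open>s\<close> that \<open>P\<close> loses; its ranks are countable ordinals and decrease as the
  recursion (2)--(6) demands.\<close>

section \<open>Countable ordinals\<close>

lemma cord_Well_order: "Well_order (rep_cord a)"
  using Quotient3_rep_reflp[OF Quotient3_cord, of a] unfolding ord_iso_nat_def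
  using ordIso_iff_ordLeq ordLeq_Well_order_simp by blast

lemma cord_eq_iff_ordIso: "a = b \<longleftrightarrow> (rep_cord a, rep_cord b) \<in> ordIso"
  using Quotient3_rel_rep[OF Quotient3_cord, of a b] unfolding ord_iso_nat_def by simp

lemma cord_le_iff_ordLeq: "cord_le a b \<longleftrightarrow> (rep_cord a, rep_cord b) \<in> ordLeq"
  by (simp add: cord_le.rep_eq)

lemma cord_le_refl [simp]: "cord_le a a"
  using cord_Well_order cord_le_iff_ordLeq ordLeq_reflexive by blast

lemma cord_le_trans: "cord_le a b \<Longrightarrow> cord_le b c \<Longrightarrow> cord_le a c"
  using cord_le_iff_ordLeq ordLeq_transitive by blast

lemma cord_le_total: "cord_le a b \<or> cord_le b a"
  using cord_le_iff_ordLeq ordLeq_total cord_Well_order by blast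

lemma cord_le_antisym: "cord_le a b \<Longrightarrow> cord_le b a \<Longrightarrow> a = b"
  using cord_le_iff_ordLeq cord_eq_iff_ordIso ordIso_iff_ordLeq by blast

lemma cord_less_iff_ordLess: "cord_less a b \<longleftrightarrow> (rep_cord a, rep_cord b) \<in> ordLess"
  unfolding cord_less_def cord_le_iff_ordLeq
  using not_ordLeq_iff_ordLess[OF cord_Well_order cord_Well_order] ordLess_imp_ordLeq by blast

lemma cord_less_le_trans: "cord_less a b \<Longrightarrow> cord_le b c \<Longrightarrow> cord_less a c"
  unfolding cord_less_def using cord_le_trans by blast

lemma cord_le_less_trans: "cord_le a b \<Longrightarrow> cord_less b c \<Longrightarrow> cord_less a c"
  unfolding cord_less_def using cord_le_trans by blast

lemma cord_not_le: "\<not> cord_le a b \<longleftrightarrow> cord_less b a"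
  unfolding cord_less_def using cord_le_total by blast

lemma cord_le_neq_less: "a \<noteq> b \<Longrightarrow> cord_le a b \<Longrightarrow> cord_less a b"
  unfolding cord_less_def using cord_le_antisym by blast

lemma wf_cord_less: "wf {(a, b). cord_less a b}"
proof -
  have "{(a, b). cord_less a b} \<subseteq> inv_image ordLess rep_cord"
    using cord_less_iff_ordLess by auto
  thus ?thesis using wf_ordLess wf_inv_image wf_subset by blast
qed

lemma cord_ex_least:
  assumes "x \<in> Q" shows "\<exists>z\<in>Q. \<forall>y\<in>Q. cord_le z y"
proof -
  obtain z where "z \<in> Q" "\<forall>y. (y, z) \<in> {(a, b). cord_less a b} \<longrightarrow> y \<notin> Q"
    using wfE_min[OF wf_cord_less assms] by blast
  thus ?thesis using cord_not_le by blast
qed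

lemma cord_zero_le [simp]: "cord_le cord_zero x"
proof -
  obtain z where z: "\<forall>y. cord_le z y" using cord_ex_least[of undefined UNIV] by blast
  have "cord_zero = z"
    unfolding cord_zero_def by (rule the_equality) (use z cord_le_antisym in blast)+
  thus ?thesis using z by simp
qed

text \<open>A strictly monotone injection into a well-order forces \<open>\<le>o\<close>: otherwise the
  composite with an embedding onto a proper initial segment would map some point strictly
  below itself, and a least such point contradicts strict monotonicity.\<close>

lemma ordLeq_if_mono_inj:
  assumes W: "Well_order r" and W': "Well_order r'"
    and inj: "inj_on f (Field r)" and im: "f ` Field r \<subseteq> Field r'"
    and mono: "\<And>a b. (a, b) \<in> r \<Longrightarrow> (f a, f b) \<in> r'"
  shows "(r, r') \<in> ordLeq"
proof (rule ccontr)
  assume "(r, r') \<notin> ordLeq"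
  hence "(r', r) \<in> ordLess" using not_ordLeq_iff_ordLess[OF W' W] by blast
  then obtain g where "embedS r' r g" unfolding ordLess_def by blast
  hence e: "embed r' r g" and nb: "\<not> bij_betw g (Field r') (Field r)" unfolding embedS_def by auto
  have cg: "compat r' r g" and ig: "inj_on g (Field r')" and of: "wo_rel.ofilter r (g ` Field r')"
    using e embed_iff_compat_inj_on_ofilter[OF W' W] by auto
  have sub: "g ` Field r' \<subseteq> Field r" and und: "\<And>a. a \<in> g ` Field r' \<Longrightarrow> under r a \<subseteq> g ` Field r'"
    using of unfolding wo_rel.ofilter_def[OF wo_rel.intro[OF W]] by auto
  have "g ` Field r' \<noteq> Field r" using nb ig unfolding bij_betw_def by auto
  then obtain a where a: "a \<in> Field r" "a \<notin> g ` Field r'" using sub by blast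
  define h where "h = g \<circ> f"
  have hF: "\<And>x. x \<in> Field r \<Longrightarrow> h x \<in> g ` Field r'" using im unfolding h_def by auto
  have tot: "\<And>x y. x \<in> Field r \<Longrightarrow> y \<in> Field r \<Longrightarrow> (x, y) \<in> r \<or> (y, x) \<in> r"
    using W unfolding order_on_defs total_on_def refl_on_def by metis
  have ha: "(h a, a) \<in> r \<and> h a \<noteq> a"
  proof -
    have "h a \<in> Field r" using hF a sub by blast
    moreover have "(a, h a) \<notin> r" using und[OF hF[OF a(1)]] a(2) unfolding under_def by blast
    ultimately show ?thesis using tot a(1) a(2) hF[OF a(1)] by metis
  qed
  have hmono: "(h x, h y) \<in> r \<and> h x \<noteq> h y" if xy: "(x, y) \<in> r" "x \<noteq> y" for x y
  proof -
    have "x \<in> Field r" "y \<in> Field r" using xy unfolding Field_def by auto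
    hence "f x \<noteq> f y" "f x \<in> Field r'" "f y \<in> Field r'" using inj xy(2) im unfolding inj_on_def by auto
    hence "g (f x) \<noteq> g (f y)" using ig unfolding inj_on_def by blast
    thus ?thesis using mono[OF xy(1)] cg unfolding compat_def h_def by auto
  qed
  let ?Q = "{x. (h x, x) \<in> r \<and> h x \<noteq> x}"
  have "wf (r - Id)" using W unfolding well_order_on_def by blast
  then obtain x0 where x0: "x0 \<in> ?Q" and least: "\<And>y. (y, x0) \<in> r - Id \<Longrightarrow> y \<notin> ?Q"
    using wfE_min[of "r - Id" a ?Q] ha by blast
  have "h x0 \<in> ?Q" using hmono x0 by simp
  moreover have "(h x0, x0) \<in> r - Id" using x0 by simp
  ultimately show False using least by blast
qed

definition ord_sum :: "(nat \<Rightarrow> 'a rel) \<Rightarrow> (nat \<times> 'a) rel" where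
  "ord_sum r = {((n, x), (m, y)). (n < m \<and> x \<in> Field (r n) \<and> y \<in> Field (r m)) \<or> (n = m \<and> (x, y) \<in> r n)}"

lemma Field_ord_sum:
  assumes "\<And>n. Well_order (r n)"
  shows "Field (ord_sum r) = {(n, x). x \<in> Field (r n)}"
proof
  show "Field (ord_sum r) \<subseteq> {(n, x). x \<in> Field (r n)}"
    unfolding ord_sum_def Field_def by auto
  have "\<And>n x. x \<in> Field (r n) \<Longrightarrow> (x, x) \<in> r n"
    using assms unfolding order_on_defs refl_on_def by blast
  thus "{(n, x). x \<in> Field (r n)} \<subseteq> Field (ord_sum r)"
    unfolding ord_sum_def Field_def by fastforce
qed

lemma Well_order_ord_sum:
  assumes W: "\<And>n. Well_order (r n)"
  shows "Well_order (ord_sum r)"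
proof -
  have rf: "\<And>n x. x \<in> Field (r n) \<Longrightarrow> (x, x) \<in> r n"
    and tr: "\<And>n. trans (r n)" and an: "\<And>n. antisym (r n)"
    and to: "\<And>n. total_on (Field (r n)) (r n)" and wfn: "\<And>n. wf (r n - Id)"
    using W unfolding order_on_defs refl_on_def by blast+
  note F = Field_ord_sum[OF W]
  have "refl_on (Field (ord_sum r)) (ord_sum r)"
    unfolding refl_on_def F by (auto simp: ord_sum_def rf)
  moreover have "trans (ord_sum r)"
    unfolding trans_def ord_sum_def using tr unfolding trans_def Field_def by auto
  moreover have "antisym (ord_sum r)"
    unfolding antisym_def ord_sum_def using an unfolding antisym_def by auto
  moreover have "total_on (Field (ord_sum r)) (ord_sum r)"
    unfolding total_on_def F using to unfolding total_on_def
    by (auto simp: ord_sum_def, metis nat_neq_iff)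
  moreover have "wf (ord_sum r - Id)"
  proof -
    have "ord_sum r - Id \<subseteq> fst <*mlex*> same_fst (\<lambda>_. True) (\<lambda>n. r n - Id)"
      unfolding ord_sum_def by (auto simp: mlex_iff same_fst_def)
    thus ?thesis using wf_subset wf_mlex wf_same_fst wfn by metis
  qed
  moreover have "ord_sum r \<subseteq> Field (ord_sum r) \<times> Field (ord_sum r)"
    by (auto intro: FieldI1 FieldI2)
  ultimately show ?thesis unfolding order_on_defs by blast
qed

lemma ordLeq_ord_sum:
  assumes W: "\<And>n. Well_order (r n)"
  shows "(r n, ord_sum r) \<in> ordLeq"
proof (rule ordLeq_if_mono_inj[where f = "Pair n"])
  show "Pair n ` Field (r n) \<subseteq> Field (ord_sum r)" using Field_ord_sum[OF W] by auto
  show "\<And>a b. (a, b) \<in> r n \<Longrightarrow> ((n, a), (n, b)) \<in> ord_sum r" unfolding ord_sum_def by auto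
qed (auto simp: W Well_order_ord_sum[OF W] inj_on_def)

lemma ex_cord_ordIso:
  fixes S :: "(nat \<times> nat) rel"
  assumes W: "Well_order S"
  shows "\<exists>b. (S, rep_cord b) \<in> ordIso"
proof -
  let ?T = "dir_image S prod_encode"
  have inj: "inj_on prod_encode (Field S)" using inj_prod_encode inj_on_subset by blast
  have ST: "(S, ?T) \<in> ordIso" using dir_image_ordIso[OF W inj] .
  have "ord_iso_nat ?T ?T"
    unfolding ord_iso_nat_def using ordIso_reflexive[OF Well_order_dir_image[OF W inj]] .
  hence "ord_iso_nat (rep_cord (abs_cord ?T)) ?T" using Quotient3_rep_abs[OF Quotient3_cord] by blast
  hence "(?T, rep_cord (abs_cord ?T)) \<in> ordIso" unfolding ord_iso_nat_def using ordIso_symmetric by blast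
  thus ?thesis using ST ordIso_transitive by blast
qed

lemma cord_seq_bounded:
  fixes g :: "nat \<Rightarrow> cord"
  shows "\<exists>b. \<forall>n. cord_le (g n) b"
proof -
  let ?r = "\<lambda>n. rep_cord (g n)"
  have W: "\<And>n. Well_order (?r n)" using cord_Well_order by blast
  obtain b where b: "(ord_sum ?r, rep_cord b) \<in> ordIso"
    using ex_cord_ordIso[OF Well_order_ord_sum[of ?r, OF W]] by blast
  have "\<forall>n. cord_le (g n) b"
    unfolding cord_le_iff_ordLeq using ordLeq_ord_sum[of ?r, OF W] b ordLeq_ordIso_trans by blast
  thus ?thesis by blast
qed

text \<open>\<open>a\<close> is a proper initial segment of \<open>a + 1 + 1 + \<dots>\<close>.\<close>

lemma cord_ex_greater: "\<exists>b. cord_less a b"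
proof -
  define r where "r = (\<lambda>n::nat. if n = 0 then rep_cord a else {(0::nat, 0::nat)})"
  have "Well_order {(0::nat, 0::nat)}"
    unfolding order_on_defs Field_def refl_on_def trans_def antisym_def total_on_def by auto
  hence W: "\<And>n. Well_order (r n)" unfolding r_def using cord_Well_order by auto
  let ?S = "ord_sum r" and ?A = "{(n, x). n = 0 \<and> x \<in> Field (r 0)}"
  have WS: "Well_order ?S" using Well_order_ord_sum[OF W] .
  note F = Field_ord_sum[OF W]
  have "wo_rel.ofilter ?S ?A"
    unfolding wo_rel.ofilter_def[OF wo_rel.intro[OF WS]] F under_def
    by (auto simp: ord_sum_def intro: FieldI1)
  moreover have "(1, 0) \<in> Field ?S" using F unfolding r_def Field_def by auto
  hence "?A \<subset> Field ?S" using F by auto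
  ultimately have lt: "(Restr ?S ?A, ?S) \<in> ordLess" using ofilter_ordLess[OF WS] by blast
  have rf: "\<And>x. x \<in> Field (r 0) \<Longrightarrow> (x, x) \<in> r 0"
    using W[of 0] unfolding order_on_defs refl_on_def by blast
  have le: "(r 0, Restr ?S ?A) \<in> ordLeq"
  proof (rule ordLeq_if_mono_inj[where f = "Pair 0"])
    show "Pair 0 ` Field (r 0) \<subseteq> Field (Restr ?S ?A)"
    proof
      fix p :: "nat \<times> nat" assume "p \<in> Pair 0 ` Field (r 0)"
      then obtain x where "p = (0, x)" "x \<in> Field (r 0)" by blast
      hence "(p, p) \<in> Restr ?S ?A" using rf unfolding ord_sum_def by auto
      thus "p \<in> Field (Restr ?S ?A)" by (rule FieldI1)
    qed
    show "\<And>x y. (x, y) \<in> r 0 \<Longrightarrow> ((0, x), (0, y)) \<in> Restr ?S ?A"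
      unfolding ord_sum_def by (auto intro: FieldI1 FieldI2)
  qed (auto simp: W Well_order_Restr[OF WS] inj_on_def)
  obtain b where b: "(?S, rep_cord b) \<in> ordIso" using ex_cord_ordIso[OF WS] by blast
  have "(rep_cord a, rep_cord b) \<in> ordLess"
    using le lt b ordLeq_ordLess_trans ordLess_ordIso_trans unfolding r_def by fastforce
  thus ?thesis using cord_less_iff_ordLess by blast
qed

lemma cord_succ_least: "cord_less a (cord_succ a) \<and> (\<forall>x. cord_less a x \<longrightarrow> cord_le (cord_succ a) x)"
proof -
  obtain b where "cord_less a b" using cord_ex_greater by blast
  then obtain s where s: "cord_less a s \<and> (\<forall>x. cord_less a x \<longrightarrow> cord_le s x)"
    using cord_ex_least[of b "{s. cord_less a s}"] by blast
  have "cord_succ a = s" unfolding cord_succ_def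
    by (rule the_equality) (use s cord_le_antisym in blast)+
  thus ?thesis using s by simp
qed

lemma cord_less_succ: "cord_less a (cord_succ a)"
  using cord_succ_least by blast

lemma cord_succ_le: "cord_less a x \<Longrightarrow> cord_le (cord_succ a) x"
  using cord_succ_least by blast

lemma cord_succ_strict_mono: "cord_less a b \<Longrightarrow> cord_less (cord_succ a) (cord_succ b)"
  using cord_succ_le cord_le_less_trans cord_less_succ by blast

definition cord_lub :: "cord set \<Rightarrow> cord" where
  "cord_lub A = (SOME z. (\<forall>a\<in>A. cord_le a z) \<and> (\<forall>y. (\<forall>a\<in>A. cord_le a y) \<longrightarrow> cord_le z y))"

lemma cord_lub:
  fixes h :: "'a::countable \<Rightarrow> cord"
  shows "(\<forall>x\<in>X. cord_le (h x) (cord_lub (h ` X))) \<and>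
         (\<forall>y. (\<forall>x\<in>X. cord_le (h x) y) \<longrightarrow> cord_le (cord_lub (h ` X)) y)"
proof -
  obtain b where "\<forall>n. cord_le (h (from_nat n)) b" using cord_seq_bounded by blast
  hence "\<forall>x. cord_le (h x) b" by (metis from_nat_to_nat)
  hence "b \<in> {y. \<forall>a\<in>h ` X. cord_le a y}" by blast
  from cord_ex_least[OF this] obtain z
    where "z \<in> {y. \<forall>a\<in>h ` X. cord_le a y}" "\<forall>y\<in>{y. \<forall>a\<in>h ` X. cord_le a y}. cord_le z y"
    by blast
  hence "\<exists>z. (\<forall>a\<in>h ` X. cord_le a z) \<and> (\<forall>y. (\<forall>a\<in>h ` X. cord_le a y) \<longrightarrow> cord_le z y)" by blast
  from someI_ex[OF this] show ?thesis unfolding cord_lub_def by blast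
qed

section \<open>The lexicographic order on signatures\<close>

lemma ex_first_difference:
  fixes f g :: "nat \<Rightarrow> 'a"
  assumes "f \<noteq> g" shows "\<exists>d. f d \<noteq> g d \<and> (\<forall>l<d. f l = g l)"
proof -
  obtain l0 where "f l0 \<noteq> g l0" using assms by blast
  hence "f (LEAST l. f l \<noteq> g l) \<noteq> g (LEAST l. f l \<noteq> g l)" by (rule LeastI[where P = "\<lambda>l. f l \<noteq> g l"])
  moreover have "\<forall>l<(LEAST l. f l \<noteq> g l). f l = g l" using not_less_Least by blast
  ultimately show ?thesis by blast
qed

lemma lex_less_irrefl [simp]: "\<not> lex_less f f"
  unfolding lex_less_def cord_less_def by auto

lemma lex_less_trans: "lex_less f g \<Longrightarrow> lex_less g h \<Longrightarrow> lex_less f h"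
proof -
  assume "lex_less f g" "lex_less g h"
  then obtain l1 l2 where l1: "cord_less (f l1) (g l1)" "\<forall>l'<l1. f l' = g l'"
    and l2: "cord_less (g l2) (h l2)" "\<forall>l'<l2. g l' = h l'"
    unfolding lex_less_def by blast
  consider "l1 < l2" | "l1 = l2" | "l2 < l1" by linarith
  thus ?thesis
  proof cases
    case 1 thus ?thesis unfolding lex_less_def using l1 l2 by (intro exI[of _ l1]) auto
  next
    case 2 thus ?thesis unfolding lex_less_def using l1 l2
      by (intro exI[of _ l1]) (auto dest: cord_less_def[THEN iffD1] intro: cord_less_le_trans)
  next
    case 3 thus ?thesis unfolding lex_less_def using l1 l2 by (intro exI[of _ l2]) (auto intro: cord_le_less_trans)
  qed
qed

lemma lex_less_asym: "lex_less f g \<Longrightarrow> \<not> lex_less g f"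
  using lex_less_trans lex_less_irrefl by blast

lemma lex_less_if_first_difference:
  assumes "f d \<noteq> g d" "\<forall>l<d. f l = g l" "cord_le (f d) (g d)"
  shows "lex_less f g"
  using assms cord_le_neq_less unfolding lex_less_def by blast

lemma lex_less_total:
  assumes "f \<noteq> g" shows "lex_less f g \<or> lex_less g f"
proof -
  obtain d where d: "f d \<noteq> g d" "\<forall>l<d. f l = g l" using ex_first_difference[OF assms] by blast
  hence d': "g d \<noteq> f d" "\<forall>l<d. g l = f l" by auto
  show ?thesis
  proof (cases "cord_le (f d) (g d)")
    case True thus ?thesis using lex_less_if_first_difference[OF d] by blast
  next
    case False
    hence "cord_le (g d) (f d)" using cord_le_total by blast
    thus ?thesis using lex_less_if_first_difference[OF d'] by blast
  qed
qed

lemma sig_le_refl [simp]: "sig_le a a"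
  by (cases a) auto

lemma sig_le_trans: "sig_le a b \<Longrightarrow> sig_le b c \<Longrightarrow> sig_le a c"
  by (cases a; cases b; cases c) (auto intro: lex_less_trans)

lemma sig_le_total: "sig_le a b \<or> sig_le b a"
  by (cases a; cases b) (auto dest: lex_less_total)

lemma sig_le_antisym: "sig_le a b \<Longrightarrow> sig_le b a \<Longrightarrow> a = b"
  by (cases a; cases b) (auto dest: lex_less_asym)

lemma sig_min_le1: "sig_le (sig_min a b) a"
  unfolding sig_min_def using sig_le_total by auto

lemma sig_min_le2: "sig_le (sig_min a b) b"
  unfolding sig_min_def using sig_le_total by auto

lemma sig_max_ge1: "sig_le a (sig_max a b)"
  unfolding sig_max_def using sig_le_total by auto

lemma sig_max_ge2: "sig_le b (sig_max a b)"
  unfolding sig_max_def using sig_le_total by auto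

lemma sig_min_cases: "sig_min a b = a \<or> sig_min a b = b"
  unfolding sig_min_def by auto

lemma sig_max_cases: "sig_max a b = a \<or> sig_max a b = b"
  unfolding sig_max_def by auto

lemma sig_min_None [simp]: "sig_min None None = None"
  unfolding sig_min_def by simp

lemma sig_max_None [simp]: "sig_max None b = None" "sig_max a None = None"
  unfolding sig_max_def by (cases b; simp) (cases a; simp)

lemma sig_min_mono: "sig_le a a' \<Longrightarrow> sig_le b b' \<Longrightarrow> sig_le (sig_min a b) (sig_min a' b')"
  using sig_min_cases[of a' b'] sig_min_le1 sig_min_le2 sig_le_trans by metis

lemma sig_max_mono: "sig_le a a' \<Longrightarrow> sig_le b b' \<Longrightarrow> sig_le (sig_max a b) (sig_max a' b')"
  using sig_max_cases[of a b] sig_max_ge1 sig_max_ge2 sig_le_trans by metis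

lemma sig_le_if_pointwise_le:
  assumes "\<forall>l. cord_le (f l) (g l)" shows "sig_le (Some f) (Some g)"
proof (cases "f = g")
  case False
  then obtain d where d: "f d \<noteq> g d" "\<forall>l<d. f l = g l" using ex_first_difference by blast
  have "lex_less f g" by (rule lex_less_if_first_difference[OF d]) (use assms in blast)
  thus ?thesis by simp
qed simp

lemma sig_le_update_at:
  fixes j :: nat and G :: "cord \<Rightarrow> cord"
  assumes le: "sig_le (Some f) (Some g)" and G: "\<And>a b. cord_less a b \<Longrightarrow> cord_le (G a) (G b)"
  defines "F h \<equiv> \<lambda>l. if l < j then h l else if l = j then G (h j) else cord_zero"
  shows "sig_le (Some (F f)) (Some (F g))"
proof (cases "f = g")
  case False
  hence "lex_less f g" using le by simp
  then obtain l where l: "cord_less (f l) (g l)" "\<forall>l'<l. f l' = g l'"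
    unfolding lex_less_def by blast
  consider "l < j" | "l = j" | "j < l" by linarith
  thus ?thesis
  proof cases
    case 1
    hence "lex_less (F f) (F g)" unfolding lex_less_def F_def using l by (intro exI[of _ l]) auto
    thus ?thesis by simp
  next
    case 2
    have agree: "\<forall>l'<j. F f l' = F g l'" using l 2 unfolding F_def by auto
    have at_j: "cord_le (F f j) (F g j)" using G l 2 unfolding F_def by simp
    show ?thesis
    proof (cases "F f j = F g j")
      case True
      have "F f = F g"
      proof
        fix l' show "F f l' = F g l'"
          using agree True by (cases l' j rule: linorder_cases) (auto simp: F_def)
      qed
      thus ?thesis by simp
    next
      case False
      have "lex_less (F f) (F g)" by (rule lex_less_if_first_difference[OF False agree at_j])
      thus ?thesis by simp
    qed
  next
    case 3
    hence "F f = F g" unfolding F_def using l by auto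
    thus ?thesis by simp
  qed
qed simp

lemma reset_from_mono:
  assumes "sig_le (Some f) (Some g)"
  shows "sig_le (Some (reset_from j f)) (Some (reset_from j g))"
proof -
  have "reset_from j h = (\<lambda>l. if l < j then h l else if l = j then (\<lambda>_. cord_zero) (h j) else cord_zero)" for h
    unfolding reset_from_def by auto
  thus ?thesis using sig_le_update_at[OF assms, of "\<lambda>_. cord_zero" j] by simp
qed

lemma incr_at_mono:
  assumes "sig_le (Some f) (Some g)"
  shows "sig_le (Some (incr_at j f)) (Some (incr_at j g))"
  unfolding incr_at_def
  by (rule sig_le_update_at[OF assms]) (meson cord_less_def cord_succ_strict_mono)

text \<open>Lexicographic minima of signatures supported below \<open>K\<close> are found coordinate by coordinate:
  \<open>lex_minimizers Q l\<close> keeps the elements of \<open>Q\<close> minimal in each of the coordinates \<open>0, \<dots>, l - 1\<close>.\<close>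

primrec lex_minimizers :: "(nat \<Rightarrow> cord) set \<Rightarrow> nat \<Rightarrow> (nat \<Rightarrow> cord) set" where
  "lex_minimizers Q 0 = Q"
| "lex_minimizers Q (Suc l) = {f \<in> lex_minimizers Q l. \<forall>g\<in>lex_minimizers Q l. cord_le (f l) (g l)}"

lemma lex_minimizers_subset: "lex_minimizers Q l \<subseteq> Q"
  by (induction l) auto

lemma lex_minimizers_antimono: "m \<le> n \<Longrightarrow> lex_minimizers Q n \<subseteq> lex_minimizers Q m"
  by (induction n rule: dec_induct) auto

lemma lex_minimizers_nonempty: "Q \<noteq> {} \<Longrightarrow> lex_minimizers Q l \<noteq> {}"
proof (induction l)
  case (Suc l)
  then obtain f where "f l \<in> (\<lambda>g. g l) ` lex_minimizers Q l" by blast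
  from cord_ex_least[OF this] show ?case by auto
qed simp

lemma lex_minimizers_agreeing:
  assumes f: "f \<in> lex_minimizers Q n" and g: "g \<in> Q" and agree: "\<forall>l<d. f l = g l" and "d \<le> n"
  shows "g \<in> lex_minimizers Q d"
proof -
  have "e \<le> d \<Longrightarrow> g \<in> lex_minimizers Q e" for e
  proof (induction e)
    case (Suc e)
    have "Suc e \<le> n" using Suc.prems \<open>d \<le> n\<close> by simp
    hence "f \<in> lex_minimizers Q (Suc e)" using f lex_minimizers_antimono by blast
    moreover have "f e = g e" using agree Suc.prems by simp
    ultimately show ?case using Suc by simp
  qed (simp add: g)
  thus ?thesis by simp
qed

lemma ex_lex_least:
  assumes "Q \<noteq> {}" and supp: "\<forall>f\<in>Q. \<forall>l\<ge>K. f l = cord_zero"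
  shows "\<exists>f\<in>Q. \<forall>g\<in>Q. f = g \<or> lex_less f g"
proof -
  obtain f where f: "f \<in> lex_minimizers Q K" using lex_minimizers_nonempty[OF assms(1)] by blast
  have fQ: "f \<in> Q" using f lex_minimizers_subset by blast
  have "f = g \<or> lex_less f g" if gQ: "g \<in> Q" for g
  proof (cases "f = g")
    case False
    then obtain d where d: "f d \<noteq> g d" "\<forall>l<d. f l = g l" using ex_first_difference by blast
    have "d < K" using d supp fQ gQ by (metis not_less)
    hence "f \<in> lex_minimizers Q (Suc d)" using f lex_minimizers_antimono by (meson Suc_leI subsetD)
    moreover have "g \<in> lex_minimizers Q d" using lex_minimizers_agreeing[OF f gQ d(2)] \<open>d < K\<close> by simp
    ultimately have "cord_le (f d) (g d)" by simp
    thus ?thesis using lex_less_if_first_difference[OF d] by blast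
  qed simp
  thus ?thesis using fQ by blast
qed

definition sig_Inf :: "sig set \<Rightarrow> sig" where
  "sig_Inf Q = (if Q = {} then None else SOME z. z \<in> Q \<and> (\<forall>y\<in>Q. sig_le z y))"

lemma sig_Inf:
  assumes "Q \<noteq> {}" and supp: "\<forall>f. Some f \<in> Q \<longrightarrow> (\<forall>l\<ge>K. f l = cord_zero)"
  shows "sig_Inf Q \<in> Q" and "y \<in> Q \<Longrightarrow> sig_le (sig_Inf Q) y"
proof -
  have "\<exists>z. z \<in> Q \<and> (\<forall>y\<in>Q. sig_le z y)"
  proof (cases "\<exists>f. Some f \<in> Q")
    case True
    then obtain f where "f \<in> {f. Some f \<in> Q}" "\<forall>g\<in>{f. Some f \<in> Q}. f = g \<or> lex_less f g"
      using ex_lex_least[of "{f. Some f \<in> Q}" K] supp by blast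
    moreover have "sig_le (Some f) y" if "y \<in> Q" "\<forall>g\<in>{f. Some f \<in> Q}. f = g \<or> lex_less f g" for y
      using that by (cases y) auto
    ultimately show ?thesis by blast
  next
    case False
    hence "\<forall>y\<in>Q. y = None" by (metis option.exhaust)
    thus ?thesis using assms(1) by fastforce
  qed
  from someI_ex[OF this] show "sig_Inf Q \<in> Q" and "y \<in> Q \<Longrightarrow> sig_le (sig_Inf Q) y"
    unfolding sig_Inf_def using assms(1) by auto
qed

definition subtree :: "tree \<Rightarrow> nat list \<Rightarrow> tree" where
  "subtree t u = (\<lambda>v. t (u @ v))"

definition append_branch :: "nat list \<Rightarrow> (nat \<Rightarrow> nat) \<Rightarrow> nat \<Rightarrow> nat" where
  "append_branch u b = (\<lambda>m. if m < length u then u ! m else b (m - length u))"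

definition shift_branch :: "(nat \<Rightarrow> nat) \<Rightarrow> nat \<Rightarrow> nat \<Rightarrow> nat" where
  "shift_branch b n = (\<lambda>m. b (m + n))"

lemma subtree_subtree [simp]: "subtree (subtree t u) v = subtree t (u @ v)"
  unfolding subtree_def by simp

lemma subtree_Nil [simp]: "subtree t [] = t"
  unfolding subtree_def by simp

lemma length_pref [simp]: "length (pref b m) = m"
  unfolding pref_def by simp

lemma pref_add: "pref b (n + m) = pref b n @ pref (shift_branch b n) m"
  unfolding pref_def shift_branch_def by (induction m) (auto simp: add.commute)

lemma pref_one: "pref b (Suc 0) = [b 0]"
  unfolding pref_def by simp

lemma take_pref: "m \<le> n \<Longrightarrow> take m (pref b n) = pref b m"
  unfolding pref_def by (simp add: take_map)

lemma pref_nth: "m < n \<Longrightarrow> pref b n ! m = b m"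
  unfolding pref_def by simp

lemma pref_append_branch_le: "m \<le> length u \<Longrightarrow> pref (append_branch u b) m = take m u"
  unfolding pref_def append_branch_def by (rule nth_equalityI) auto

lemma pref_append_branch: "pref (append_branch u b) (length u + m) = u @ pref b m"
proof -
  have "shift_branch (append_branch u b) (length u) = b"
    unfolding shift_branch_def append_branch_def by auto
  thus ?thesis using pref_add[of "append_branch u b" "length u" m] pref_append_branch_le[of "length u" u b]
    by simp
qed

lemma finite_shifted_iff:
  fixes n :: nat
  shows "finite {m. P (m + n)} \<longleftrightarrow> finite {m. P m}"
proof
  assume "finite {m. P (m + n)}"
  moreover have "{m. P m} \<subseteq> {..<n} \<union> (\<lambda>m. m + n) ` {m. P (m + n)}"
  proof
    fix x assume "x \<in> {m. P m}"
    thus "x \<in> {..<n} \<union> (\<lambda>m. m + n) ` {m. P (m + n)}"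
      by (cases "x < n") (auto intro!: image_eqI[where x = "x - n"])
  qed
  ultimately show "finite {m. P m}" using finite_subset by blast
next
  assume "finite {m. P m}"
  moreover have "{m. P (m + n)} \<subseteq> (\<lambda>m. m - n) ` {m. P m}"
  proof
    fix x assume "x \<in> {m. P (m + n)}"
    thus "x \<in> (\<lambda>m. m - n) ` {m. P m}" by (intro image_eqI[where x = "x + n"]) auto
  qed
  ultimately show "finite {m. P (m + n)}" using finite_surj by blast
qed

lemma finite_subtree_branch_iff:
  "finite {m. subtree t (pref b n) (pref (shift_branch b n) m) = x} \<longleftrightarrow> finite {m. t (pref b m) = x}"
proof -
  have "subtree t (pref b n) (pref (shift_branch b n) m) = t (pref b (m + n))" for m
    unfolding subtree_def using pref_add by (metis add.commute)
  thus ?thesis using finite_shifted_iff[of "\<lambda>m. t (pref b m) = x" n] by simp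
qed

lemma is_tree_prefix:
  assumes T: "is_tree i k t" and "t (u @ v) \<noteq> None" shows "t u \<noteq> None"
  using assms(2)
proof (induction v rule: rev_induct)
  case (snoc x xs)
  thus ?case using T unfolding is_tree_def by (metis append_assoc)
qed simp

lemma is_tree_subtree:
  "is_tree i k t \<Longrightarrow> t u \<noteq> None \<Longrightarrow> is_tree i k (subtree t u)"
  unfolding is_tree_def subtree_def by (metis append_assoc append_Nil2)

lemma is_branch_append_branch:
  assumes T: "is_tree i k t" and u: "t u \<noteq> None" and b: "is_branch (subtree t u) b"
  shows "is_branch t (append_branch u b)"
  unfolding is_branch_def
proof
  fix m
  show "t (pref (append_branch u b) m) \<noteq> None"
  proof (cases "m \<le> length u")
    case True
    thus ?thesis using pref_append_branch_le[OF True] is_tree_prefix[OF T, of "take m u" "drop m u"] u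
      by simp
  next
    case False
    then obtain m' where "m = length u + m'" by (metis le_add_diff_inverse nat_le_linear)
    thus ?thesis using b pref_append_branch[of u b m'] unfolding is_branch_def subtree_def by simp
  qed
qed

lemma is_branch_shift_branch:
  "is_branch t b \<Longrightarrow> is_branch (subtree t (pref b n)) (shift_branch b n)"
  unfolding is_branch_def subtree_def by (metis pref_add)

lemma well_formed_subtree:
  assumes W: "well_formed i k t" and u: "t u \<noteq> None" shows "well_formed i k (subtree t u)"
  unfolding well_formed_def
proof (intro conjI allI impI)
  have T: "is_tree i k t" using W unfolding well_formed_def by blast
  thus "is_tree i k (subtree t u)" using is_tree_subtree u by blast
  fix b assume "is_branch (subtree t u) b"
  hence "finite {m. t (pref (append_branch u b) m) = Some Sim}"
    using W is_branch_append_branch[OF T u] unfolding well_formed_def by blast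
  hence "finite {m. t (pref (append_branch u b) (m + length u)) = Some Sim}"
    using finite_shifted_iff[of "\<lambda>m. t (pref (append_branch u b) m) = Some Sim" "length u"] by simp
  moreover have "pref (append_branch u b) (m + length u) = u @ pref b m" for m
    using pref_append_branch by (metis add.commute)
  ultimately show "finite {m. subtree t u (pref b m) = Some Sim}" unfolding subtree_def by simp
qed

lemma well_formed_if_children:
  assumes T: "is_tree i k t" and ch: "\<And>n. t [n] \<noteq> None \<Longrightarrow> well_formed i k (subtree t [n])"
  shows "well_formed i k t"
  unfolding well_formed_def
proof (intro conjI allI impI)
  fix b assume b: "is_branch t b"
  have "t [b 0] \<noteq> None" using b pref_one unfolding is_branch_def by metis
  hence "well_formed i k (subtree t (pref b 1))" using ch pref_one by simp
  hence "finite {m. subtree t (pref b 1) (pref (shift_branch b 1) m) = Some Sim}"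
    using is_branch_shift_branch[OF b] unfolding well_formed_def by blast
  thus "finite {m. t (pref b m) = Some Sim}" unfolding finite_subtree_branch_iff .
qed (rule T)

lemma is_tree_if_children:
  assumes root: "t [] = Some a" "in_alph i k a"
    and ch: "\<And>n. n < arity a \<Longrightarrow> is_tree i k (subtree t [n])"
    and out: "\<And>n v. \<not> n < arity a \<Longrightarrow> t (n # v) = None"
  shows "is_tree i k t"
proof -
  have sub: "t (n # v) = subtree t [n] v" for n v unfolding subtree_def by simp
  have "t u \<noteq> None" if "t (u @ [n]) \<noteq> None" for u n
  proof (cases u)
    case (Cons m v)
    hence "m < arity a" using that out by fastforce
    thus ?thesis using ch[of m] that Cons sub unfolding is_tree_def by (metis append_Cons)
  qed (simp add: root)
  moreover have "in_alph i k c \<and> (\<forall>n. t (u @ [n]) \<noteq> None \<longleftrightarrow> n < arity c)" if "t u = Some c" for u c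
  proof (cases u)
    case Nil
    have "subtree t [n] [] \<noteq> None" if "n < arity a" for n using ch[OF that] unfolding is_tree_def by blast
    thus ?thesis using that Nil root out sub by (metis append_Nil option.inject)
  next
    case (Cons m v)
    hence "m < arity a" using that out by fastforce
    thus ?thesis using ch[of m] that Cons sub unfolding is_tree_def by (metis append_Cons)
  qed
  ultimately show ?thesis unfolding is_tree_def using root by blast
qed

lemma is_tree_root: "is_tree i k t \<Longrightarrow> \<exists>a. t [] = Some a"
  unfolding is_tree_def by auto

lemma is_tree_child_iff: "is_tree i k t \<Longrightarrow> t u = Some a \<Longrightarrow> t (u @ [n]) \<noteq> None \<longleftrightarrow> n < arity a"
  unfolding is_tree_def by metis

lemma is_tree_in_alph: "is_tree i k t \<Longrightarrow> t u = Some a \<Longrightarrow> in_alph i k a"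
  unfolding is_tree_def by blast

lemma is_tree_root_child_iff: "is_tree i k t \<Longrightarrow> t [] = Some a \<Longrightarrow> t [n] \<noteq> None \<longleftrightarrow> n < arity a"
  using is_tree_child_iff[of i k t "[]"] by simp

lemma is_tree_beyond_arity:
  assumes T: "is_tree i k t" "t [] = Some a" and "\<not> n < arity a" shows "t (n # v) = None"
proof -
  have "t [n] = None" using is_tree_root_child_iff[OF T, of n] assms(3) by blast
  thus ?thesis using is_tree_prefix[OF T(1), of "[n]" v] by (cases "t (n # v)") auto
qed

lemma unary_root [simp]: "unary a t [] = Some a"
  unfolding unary_def by simp

lemma binary_root [simp]: "binary a l r [] = Some a"
  unfolding binary_def by simp

lemma subtree_unary [simp]: "subtree (unary a t) [0] = t"
  unfolding unary_def subtree_def by simp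

lemma subtree_binary [simp]: "subtree (binary a l r) [0] = l" "subtree (binary a l r) [Suc 0] = r"
  unfolding binary_def subtree_def by simp_all

lemma is_tree_unary:
  assumes "is_tree i k t" "in_alph i k a" "arity a = 1" shows "is_tree i k (unary a t)"
proof (rule is_tree_if_children)
  show "unary a t [] = Some a" by simp
  show "is_tree i k (subtree (unary a t) [n])" if "n < arity a" for n
    using that assms by simp
  show "unary a t (n # v) = None" if "\<not> n < arity a" for n v
    using that assms(3) unfolding unary_def by simp
qed (rule assms(2))

lemma is_tree_binary:
  assumes "is_tree i k l" "is_tree i k r" "in_alph i k a" "arity a = 2" shows "is_tree i k (binary a l r)"
proof (rule is_tree_if_children)
  show "binary a l r [] = Some a" by simp
  show "is_tree i k (subtree (binary a l r) [n])" if "n < arity a" for n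
    using that assms by (cases n) auto
  show "binary a l r (n # v) = None" if "\<not> n < arity a" for n v
    using that assms(4) unfolding binary_def by simp
qed (rule assms(3))

lemma well_formed_unary:
  assumes W: "well_formed i k t" and a: "in_alph i k a" "arity a = 1"
  shows "well_formed i k (unary a t)"
proof (rule well_formed_if_children)
  show "is_tree i k (unary a t)" using is_tree_unary W a unfolding well_formed_def by blast
  fix n assume "unary a t [n] \<noteq> None"
  hence "n = 0" unfolding unary_def by (auto split: if_splits)
  thus "well_formed i k (subtree (unary a t) [n])" using W by simp
qed

lemma well_formed_binary:
  assumes L: "well_formed i k l" and R: "well_formed i k r" and a: "in_alph i k a" "arity a = 2"
  shows "well_formed i k (binary a l r)"
proof (rule well_formed_if_children)
  show "is_tree i k (binary a l r)" using is_tree_binary L R a unfolding well_formed_def by blast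
  fix n assume "binary a l r [n] \<noteq> None"
  hence "n = 0 \<or> n = 1" unfolding binary_def by (auto split: if_splits)
  thus "well_formed i k (subtree (binary a l r) [n])" using L R by auto
qed

lemma well_formed_child:
  assumes W: "well_formed i k t" and "t [] = Some a" "n < arity a"
  shows "well_formed i k (subtree t [n])"
proof -
  have "is_tree i k t" using W unfolding well_formed_def by blast
  hence "t [n] \<noteq> None" using is_tree_root_child_iff assms(2,3) by blast
  thus ?thesis using well_formed_subtree[OF W] by blast
qed

lemma unary_subtree_eq:
  assumes T: "is_tree i k t" and r: "t [] = Some a" and ar: "arity a = 1"
  shows "unary a (subtree t [0]) = t"
proof
  fix u show "unary a (subtree t [0]) u = t u"
  proof (cases u)
    case (Cons n v)
    thus ?thesis using is_tree_beyond_arity[OF T r, of n v] ar unfolding unary_def subtree_def by simp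
  qed (simp add: r)
qed

lemma binary_subtree_eq:
  assumes T: "is_tree i k t" and r: "t [] = Some a" and ar: "arity a = 2"
  shows "binary a (subtree t [0]) (subtree t [1]) = t"
proof
  fix u show "binary a (subtree t [0]) (subtree t [1]) u = t u"
  proof (cases u)
    case (Cons n v)
    thus ?thesis using is_tree_beyond_arity[OF T r, of n v] ar unfolding binary_def subtree_def by simp
  qed (simp add: r)
qed

definition sim_count :: "tree \<Rightarrow> nat list \<Rightarrow> nat" where
  "sim_count t u = card {m. m < length u \<and> t (take m u) = Some Sim}"

lemma switched_iff_odd_sim_count: "switched t u \<longleftrightarrow> odd (sim_count t u)"
  unfolding switched_def sim_count_def ..

lemma sim_count_append: "sim_count t (u @ v) = sim_count t u + sim_count (subtree t u) v"
proof -
  let ?A = "{m. m < length u \<and> t (take m u) = Some Sim}"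
  let ?C = "{m. m < length v \<and> t (u @ take m v) = Some Sim}"
  let ?B = "(\<lambda>m. m + length u) ` ?C"
  have "{m. m < length (u @ v) \<and> t (take m (u @ v)) = Some Sim} = ?A \<union> ?B"
  proof (rule set_eqI)
    fix x
    show "x \<in> {m. m < length (u @ v) \<and> t (take m (u @ v)) = Some Sim} \<longleftrightarrow> x \<in> ?A \<union> ?B"
    proof (cases "x < length u")
      case False
      hence "x = (x - length u) + length u" by simp
      thus ?thesis using False by (auto simp: image_iff intro!: exI[of _ "x - length u"])
    qed auto
  qed
  moreover have "card (?A \<union> ?B) = card ?A + card ?B" by (rule card_Un_disjoint) auto
  moreover have "card ?B = card ?C" by (rule card_image) (auto simp: inj_on_def)
  ultimately show ?thesis unfolding sim_count_def subtree_def by simp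
qed

lemma sim_count_single: "sim_count t [n] = (if t [] = Some Sim then 1 else 0)"
proof -
  have "{m. m < length [n] \<and> t (take m [n]) = Some Sim} = (if t [] = Some Sim then {0} else {})" by auto
  thus ?thesis unfolding sim_count_def by simp
qed

lemma switched_append:
  "even (sim_count t u) \<Longrightarrow> switched t (u @ v) \<longleftrightarrow> switched (subtree t u) v"
  unfolding switched_iff_odd_sim_count sim_count_append by simp

lemma controls_append:
  "even (sim_count t u) \<Longrightarrow> controls t P (u @ v) \<longleftrightarrow> controls (subtree t u) P v"
  unfolding controls_def using switched_append[of t u v] by (simp add: subtree_def)

lemma ex_all_ge_shift_iff:
  fixes n :: nat
  shows "(\<exists>N. \<forall>m\<ge>N. p (n + m)) \<longleftrightarrow> (\<exists>N. \<forall>m\<ge>N. p m)"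
proof
  assume "\<exists>N. \<forall>m\<ge>N. p (n + m)"
  then obtain N where N: "\<forall>m\<ge>N. p (n + m)" by blast
  have "p m" if "m \<ge> N + n" for m using N[rule_format, of "m - n"] that by simp
  thus "\<exists>N. \<forall>m\<ge>N. p m" by blast
next
  assume "\<exists>N. \<forall>m\<ge>N. p m"
  thus "\<exists>N. \<forall>m\<ge>N. p (n + m)" by (metis le_add2 le_trans)
qed

lemma eventually_switched_shift:
  assumes "even (sim_count t (pref b n))"
  shows "eventually_switched (subtree t (pref b n)) (shift_branch b n) \<longleftrightarrow> eventually_switched t b"
proof -
  have "switched (subtree t (pref b n)) (pref (shift_branch b n) m) \<longleftrightarrow> switched t (pref b (n + m))" for m
    using switched_append[OF assms] pref_add by metis
  thus ?thesis unfolding eventually_switched_def using ex_all_ge_shift_iff[of "\<lambda>m. switched t (pref b m)" n]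
    by simp
qed

lemma min_inf_prio_shift:
  "min_inf_prio k (subtree t (pref b n)) (shift_branch b n) = min_inf_prio k t b"
  unfolding min_inf_prio_def finite_subtree_branch_iff ..

lemma wins_play_shift:
  assumes "even (sim_count t (pref b n))"
  shows "wins_play k (subtree t (pref b n)) P (shift_branch b n) \<longleftrightarrow> wins_play k t P b"
  unfolding wins_play_def eventually_switched_shift[OF assms] min_inf_prio_shift ..

definition winning_strategy :: "nat \<Rightarrow> tree \<Rightarrow> player \<Rightarrow> (nat list \<Rightarrow> nat) \<Rightarrow> bool" where
  "winning_strategy k t P s \<longleftrightarrow>
     strategy t P s \<and> (\<forall>b. is_branch t b \<and> consistent t P s b \<longrightarrow> wins_play k t P b)"

lemma wins_iff_winning_strategy: "wins k t P \<longleftrightarrow> (\<exists>s. winning_strategy k t P s)"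
  unfolding wins_def winning_strategy_def ..

definition consistent_path :: "tree \<Rightarrow> player \<Rightarrow> (nat list \<Rightarrow> nat) \<Rightarrow> nat list \<Rightarrow> bool" where
  "consistent_path t P s u \<longleftrightarrow> (\<forall>m<length u. controls t P (take m u) \<longrightarrow> u ! m = s (take m u))"

text \<open>Only subtrees reached through an even number of \<open>\<sim>\<close> keep the roles of the players.\<close>

lemma winning_strategy_subtree:
  assumes T: "is_tree i k t" and W: "winning_strategy k t P s" and u: "t u \<noteq> None"
    and cp: "consistent_path t P s u" and ev: "even (sim_count t u)"
  shows "winning_strategy k (subtree t u) P (\<lambda>v. s (u @ v))"
  unfolding winning_strategy_def
proof (intro conjI allI impI)
  show "strategy (subtree t u) P (\<lambda>v. s (u @ v))"
    unfolding strategy_def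
  proof (intro allI impI)
    fix v assume "subtree t u v \<noteq> None \<and> controls (subtree t u) P v"
    hence "t (u @ v) \<noteq> None \<and> controls t P (u @ v)" using controls_append[OF ev] by (simp add: subtree_def)
    hence "t ((u @ v) @ [s (u @ v)]) \<noteq> None" using W unfolding winning_strategy_def strategy_def by blast
    thus "subtree t u (v @ [s (u @ v)]) \<noteq> None" by (simp add: subtree_def)
  qed
  fix b assume b: "is_branch (subtree t u) b \<and> consistent (subtree t u) P (\<lambda>v. s (u @ v)) b"
  let ?b = "append_branch u b"
  have "consistent t P s ?b" unfolding consistent_def
  proof (intro allI impI)
    fix m assume c: "controls t P (pref ?b m)"
    show "?b m = s (pref ?b m)"
    proof (cases "m < length u")
      case True
      thus ?thesis using cp c pref_append_branch_le[of m u b]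
        unfolding consistent_path_def append_branch_def by simp
    next
      case False
      then obtain m' where m': "m = length u + m'" by (metis le_add_diff_inverse not_less)
      have "controls (subtree t u) P (pref b m')" using c controls_append[OF ev] pref_append_branch m' by metis
      hence "b m' = s (u @ pref b m')" using b unfolding consistent_def by blast
      thus ?thesis using m' pref_append_branch by (simp add: append_branch_def)
    qed
  qed
  hence "wins_play k t P ?b" using W is_branch_append_branch[OF T u] b unfolding winning_strategy_def by blast
  moreover have "pref ?b (length u) = u" using pref_append_branch_le[of "length u" u b] by simp
  ultimately show "wins_play k (subtree t u) P b"
    using wins_play_shift[of t ?b "length u" k P] ev by (simp add: shift_branch_def append_branch_def)
qed

lemma controls_Nil: "controls t P [] \<longleftrightarrow> t [] = Some (cP P)"
  unfolding controls_def switched_def by simp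

lemma cP_neq_opp: "cP P \<noteq> cP (opp P)"
  by (cases P) auto

lemma cP_neq_Sim: "cP P \<noteq> Sim"
  by (cases P) auto

lemma arity_cP: "arity (cP P) = 2"
  by (cases P) auto

lemma in_alph_cP: "in_alph i k (cP P)"
  unfolding in_alph_def by (cases P) auto

lemma cP_cases: "cP P = C1 \<or> cP P = C2"
  by (cases P) auto

lemma binary_label_cases: "c = C1 \<or> c = C2 \<Longrightarrow> c = cP P \<or> c = cP (opp P)"
  by (cases P) auto

lemma wins_child_along_strategy:
  assumes T: "is_tree i k t" and r: "t [] = Some a" "a \<noteq> Sim" and s: "winning_strategy k t P s"
    and n: "t [n] \<noteq> None" "controls t P [] \<Longrightarrow> n = s []"
  shows "wins k (subtree t [n]) P"
proof -
  have "consistent_path t P s [n]" unfolding consistent_path_def using n(2) by simp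
  moreover have "even (sim_count t [n])" using r by (simp add: sim_count_single)
  ultimately show ?thesis using winning_strategy_subtree[OF T s n(1)] wins_iff_winning_strategy by blast
qed

lemma wins_child_if_not_controls:
  assumes T: "is_tree i k t" and r: "t [] = Some a" "a \<noteq> Sim" and W: "wins k t P"
    and "\<not> controls t P []" "t [n] \<noteq> None"
  shows "wins k (subtree t [n]) P"
  using W wins_child_along_strategy[OF T r] assms(5,6) wins_iff_winning_strategy by blast

lemma wins_some_child:
  assumes T: "is_tree i k t" and r: "t [] = Some a" "a \<noteq> Sim" and W: "wins k t P"
  shows "\<exists>n. t [n] \<noteq> None \<and> wins k (subtree t [n]) P"
proof -
  obtain s where s: "winning_strategy k t P s" using W wins_iff_winning_strategy by blast
  show ?thesis
  proof (cases "controls t P []")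
    case True
    hence "t [s []] \<noteq> None" using s r unfolding winning_strategy_def strategy_def by force
    thus ?thesis using wins_child_along_strategy[OF T r s] by blast
  next
    case False
    have "t [0] \<noteq> None" using is_tree_root_child_iff[OF T r(1), of 0] by (cases a) auto
    thus ?thesis using wins_child_along_strategy[OF T r s] False by blast
  qed
qed

lemma wins_if_children:
  assumes T: "is_tree i k t" and r: "t [] = Some a" "a \<noteq> Sim"
    and c0: "c0 \<in> C" "t [c0] \<noteq> None" and WC: "\<And>n. n \<in> C \<Longrightarrow> wins k (subtree t [n]) P"
    and all: "\<not> controls t P [] \<Longrightarrow> (\<forall>n. t [n] \<noteq> None \<longrightarrow> n \<in> C)"
  shows "wins k t P"
proof -
  define ss where "ss = (\<lambda>n. SOME s. winning_strategy k (subtree t [n]) P s)"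
  have ss: "\<And>n. n \<in> C \<Longrightarrow> winning_strategy k (subtree t [n]) P (ss n)"
    unfolding ss_def using WC wins_iff_winning_strategy by (metis someI_ex)
  define s where "s = (\<lambda>u. case u of [] \<Rightarrow> c0 | n # v \<Rightarrow> (if n \<in> C then ss n v else 0))"
  have ev: "\<And>n. even (sim_count t [n])" using r by (simp add: sim_count_single)
  have "strategy t P s" unfolding strategy_def
  proof (intro allI impI)
    fix u assume u: "t u \<noteq> None \<and> controls t P u"
    show "t (u @ [s u]) \<noteq> None"
    proof (cases u)
      case Nil thus ?thesis using c0 unfolding s_def by simp
    next
      case (Cons n v)
      show ?thesis
      proof (cases "n \<in> C")
        case True
        have "controls (subtree t [n]) P v" "subtree t [n] v \<noteq> None"
          using u Cons controls_append[OF ev[of n], of P v] by (simp_all add: subtree_def)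
        hence "subtree t [n] (v @ [ss n v]) \<noteq> None"
          using ss[OF True] unfolding winning_strategy_def strategy_def by blast
        thus ?thesis using Cons True unfolding s_def subtree_def by simp
      next
        case False
        obtain b where "t u = Some b" using u by blast
        hence "t (u @ [0]) \<noteq> None" using is_tree_child_iff[OF T, of u b 0] by (cases b) auto
        thus ?thesis using Cons False unfolding s_def by simp
      qed
    qed
  qed
  moreover have "wins_play k t P b" if b: "is_branch t b" "consistent t P s b" for b
  proof -
    let ?n = "b 0"
    have "t [?n] \<noteq> None" using b pref_one unfolding is_branch_def by metis
    moreover have "controls t P [] \<Longrightarrow> b 0 = s []"
      using b(2) unfolding consistent_def pref_def by (metis list.simps(8) upt_0)
    ultimately have nC: "?n \<in> C" using all c0 unfolding s_def by auto
    have "consistent (subtree t [?n]) P (ss ?n) (shift_branch b 1)" unfolding consistent_def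
    proof (intro allI impI)
      fix m assume c: "controls (subtree t [?n]) P (pref (shift_branch b 1) m)"
      have pe: "pref b (1 + m) = [?n] @ pref (shift_branch b 1) m" using pref_add[of b 1 m] pref_one by simp
      hence "controls t P (pref b (1 + m))" using c controls_append[OF ev] by simp
      hence "b (1 + m) = s (pref b (1 + m))" using b unfolding consistent_def by blast
      thus "shift_branch b 1 m = ss ?n (pref (shift_branch b 1) m)"
        using pe nC unfolding s_def shift_branch_def by (simp add: add.commute)
    qed
    moreover have "is_branch (subtree t [?n]) (shift_branch b 1)"
      using is_branch_shift_branch[OF b(1), of 1] pref_one by simp
    ultimately have "wins_play k (subtree t [?n]) P (shift_branch b 1)"
      using ss[OF nC] unfolding winning_strategy_def by blast
    thus "wins_play k t P b" using wins_play_shift[of t b 1 k P] ev pref_one by simp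
  qed
  ultimately show ?thesis using wins_iff_winning_strategy unfolding winning_strategy_def by blast
qed

lemma wins_unary_iff:
  assumes t: "is_tree i k t" and a: "in_alph i k a" "arity a = 1" "a \<noteq> Sim" "a \<noteq> cP P"
  shows "wins k (unary a t) P \<longleftrightarrow> wins k t P"
proof -
  have T: "is_tree i k (unary a t)" using is_tree_unary[OF t a(1,2)] .
  have nc: "\<not> controls (unary a t) P []" using a(4) controls_Nil by simp
  have ch: "\<And>n. unary a t [n] \<noteq> None \<longleftrightarrow> n = 0" using is_tree_root_child_iff[OF T, of a] a(2) by simp
  show ?thesis
  proof
    assume "wins k (unary a t) P"
    thus "wins k t P" using wins_child_if_not_controls[OF T _ a(3) _ nc, of 0] ch by simp
  next
    assume "wins k t P"
    thus "wins k (unary a t) P" using wins_if_children[OF T unary_root a(3), of 0 "{0}"] ch by auto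
  qed
qed

lemma wins_unary_Pr_iff:
  "is_tree i k t \<Longrightarrow> i \<le> j \<Longrightarrow> j \<le> k \<Longrightarrow> wins k (unary (Pr j) t) P \<longleftrightarrow> wins k t P"
  using wins_unary_iff[of i k t "Pr j" P] by (cases P) (auto simp: in_alph_def)

lemma wins_binary_own_iff:
  assumes L: "is_tree i k l" and R: "is_tree i k r"
  shows "wins k (binary (cP P) l r) P \<longleftrightarrow> wins k l P \<or> wins k r P"
proof -
  let ?T = "binary (cP P) l r"
  have T: "is_tree i k ?T" using is_tree_binary[OF L R in_alph_cP arity_cP] .
  have ch: "\<And>n. ?T [n] \<noteq> None \<longleftrightarrow> n < 2" using is_tree_root_child_iff[OF T binary_root] arity_cP by metis
  have cr: "controls ?T P []" using controls_Nil by simp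
  show ?thesis
  proof
    assume "wins k ?T P"
    then obtain n where n: "?T [n] \<noteq> None" "wins k (subtree ?T [n]) P"
      using wins_some_child[OF T binary_root cP_neq_Sim] by blast
    have "n = 0 \<or> n = 1" using n(1) ch by auto
    thus "wins k l P \<or> wins k r P" using n(2) by auto
  next
    have one_child: "wins k ?T P" if "n < 2" "wins k (subtree ?T [n]) P" for n
    proof (rule wins_if_children[OF T binary_root cP_neq_Sim, of n "{n}"])
      show "?T [n] \<noteq> None" using ch that(1) by blast
    qed (use that(2) cr in auto)
    assume "wins k l P \<or> wins k r P"
    thus "wins k ?T P" using one_child[of 0] one_child[of 1] by auto
  qed
qed

lemma wins_binary_opp_iff:
  assumes L: "is_tree i k l" and R: "is_tree i k r"
  shows "wins k (binary (cP (opp P)) l r) P \<longleftrightarrow> wins k l P \<and> wins k r P"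
proof -
  let ?T = "binary (cP (opp P)) l r"
  have T: "is_tree i k ?T" using is_tree_binary[OF L R in_alph_cP arity_cP] .
  have ch: "\<And>n. ?T [n] \<noteq> None \<longleftrightarrow> n < 2" using is_tree_root_child_iff[OF T binary_root] arity_cP by metis
  have cr: "\<not> controls ?T P []" using controls_Nil cP_neq_opp[of P] by (simp add: eq_commute)
  show ?thesis
  proof
    assume w: "wins k ?T P"
    have child: "wins k (subtree ?T [n]) P" if "n < 2" for n
      using wins_child_if_not_controls[OF T binary_root cP_neq_Sim w cr] ch that by blast
    show "wins k l P \<and> wins k r P" using child[of 0] child[of 1] by simp
  next
    assume w: "wins k l P \<and> wins k r P"
    show "wins k ?T P"
    proof (rule wins_if_children[OF T binary_root cP_neq_Sim, of 0 "{0, 1}"])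
      show "?T [0] \<noteq> None" using ch by simp
      show "\<And>n. n \<in> {0, 1} \<Longrightarrow> wins k (subtree ?T [n]) P" using w by auto
      show "\<not> controls ?T P [] \<Longrightarrow> \<forall>n. ?T [n] \<noteq> None \<longrightarrow> n \<in> {0, 1}" using ch by auto
    qed simp
  qed
qed

section \<open>The signature operator\<close>

definition sig_combine :: "player \<Rightarrow> lab \<Rightarrow> sig \<Rightarrow> sig \<Rightarrow> sig" where
  "sig_combine P c a b = (if c = cP P then sig_min a b else sig_max a b)"

definition prio_update :: "player \<Rightarrow> nat \<Rightarrow> sig \<Rightarrow> sig" where
  "prio_update P j x = map_option (if losing P j then incr_at j else reset_from j) x"

definition sig_step :: "nat \<Rightarrow> (player \<Rightarrow> tree \<Rightarrow> sig) \<Rightarrow> player \<Rightarrow> tree \<Rightarrow> sig" where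
  "sig_step k x P t = (if \<not> wins k t P then None else (case t [] of
       Some Sim \<Rightarrow> Some zero_sig
     | Some (Pr j) \<Rightarrow> prio_update P j (x P (subtree t [0]))
     | Some c \<Rightarrow> sig_combine P c (x P (subtree t [0])) (x P (subtree t [1]))
     | None \<Rightarrow> None))"

lemma sig_combine_cP [simp]: "sig_combine P (cP P) a b = sig_min a b"
  unfolding sig_combine_def by simp

lemma sig_combine_opp [simp]: "sig_combine P (cP (opp P)) a b = sig_max a b"
  unfolding sig_combine_def using cP_neq_opp[of P] by simp

lemma sig_combine_cases: "sig_combine P c a b = a \<or> sig_combine P c a b = b"
  unfolding sig_combine_def using sig_min_cases sig_max_cases by auto

lemma sig_combine_mono:
  "sig_le a a' \<Longrightarrow> sig_le b b' \<Longrightarrow> sig_le (sig_combine P c a b) (sig_combine P c a' b')"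
  unfolding sig_combine_def using sig_min_mono sig_max_mono by auto

lemma prio_update_mono: "sig_le a b \<Longrightarrow> sig_le (prio_update P j a) (prio_update P j b)"
  unfolding prio_update_def
  by (cases a; cases b) (auto simp del: sig_le.simps simp: incr_at_mono reset_from_mono sig_le.simps(1,2))

lemma sig_step_binary:
  "wins k (binary c l r) P \<Longrightarrow> c = C1 \<or> c = C2 \<Longrightarrow> sig_step k x P (binary c l r) = sig_combine P c (x P l) (x P r)"
  unfolding sig_step_def by auto

lemma sig_step_unary:
  "wins k (unary (Pr j) t) P \<Longrightarrow> sig_step k x P (unary (Pr j) t) = prio_update P j (x P t)"
  unfolding sig_step_def by simp

lemma sig_step_root_binary:
  "t [] = Some c \<Longrightarrow> c = C1 \<or> c = C2 \<Longrightarrow>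
   sig_step k x P t = (if wins k t P then sig_combine P c (x P (subtree t [0])) (x P (subtree t [1])) else None)"
  unfolding sig_step_def by auto

lemma sig_step_mono:
  assumes le: "\<And>P t. well_formed i k t \<Longrightarrow> sig_le (x P t) (y P t)" and W: "well_formed i k t"
  shows "sig_le (sig_step k x P t) (sig_step k y P t)"
proof -
  have T: "is_tree i k t" using W unfolding well_formed_def by blast
  obtain a where a: "t [] = Some a" using is_tree_root[OF T] by blast
  have child: "sig_le (x P (subtree t [n])) (y P (subtree t [n]))" if "n < arity a" for n
    using le well_formed_child[OF W a that] by blast
  consider "a = Sim" | j where "a = Pr j" | "a = C1 \<or> a = C2" by (cases a) auto
  thus ?thesis
  proof cases
    case 1 thus ?thesis using a unfolding sig_step_def by simp
  next
    case (2 j) thus ?thesis using a child[of 0] prio_update_mono unfolding sig_step_def by simp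
  next
    case 3
    hence "sig_le (sig_combine P a (x P (subtree t [0])) (x P (subtree t [1])))
                  (sig_combine P a (y P (subtree t [0])) (y P (subtree t [1])))"
      using child[of 0] child[of 1] sig_combine_mono by auto
    thus ?thesis using sig_step_root_binary[where t = t and c = a, OF a 3] by simp
  qed
qed

lemma valid_sig_None [simp]: "valid_sig i k P None"
  unfolding valid_sig_def by simp

lemma valid_sig_zero: "valid_sig i k P (Some zero_sig)"
  unfolding valid_sig_def zero_sig_def by simp

lemma valid_sig_supported: "valid_sig i k P (Some f) \<Longrightarrow> l \<ge> Suc k \<Longrightarrow> f l = cord_zero"
  unfolding valid_sig_def by auto

lemma valid_sig_prio_update:
  assumes "valid_sig i k P a" "i \<le> j" "j \<le> k"
  shows "valid_sig i k P (prio_update P j a)"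
  using assms unfolding prio_update_def valid_sig_def incr_at_def reset_from_def by auto

lemma valid_sig_step:
  assumes v: "\<And>P t. well_formed i k t \<Longrightarrow> valid_sig i k P (x P t)" and W: "well_formed i k t"
  shows "valid_sig i k P (sig_step k x P t)"
proof -
  have T: "is_tree i k t" using W unfolding well_formed_def by blast
  obtain a where a: "t [] = Some a" using is_tree_root[OF T] by blast
  have child: "valid_sig i k P (x P (subtree t [n]))" if "n < arity a" for n
    using v well_formed_child[OF W a that] by blast
  consider "a = Sim" | j where "a = Pr j" | "a = C1 \<or> a = C2" by (cases a) auto
  thus ?thesis
  proof cases
    case 1 thus ?thesis using a valid_sig_zero unfolding sig_step_def by simp
  next
    case (2 j)
    hence "i \<le> j" "j \<le> k" using is_tree_in_alph[OF T a] unfolding in_alph_def by auto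
    thus ?thesis using a child[of 0] 2 valid_sig_prio_update unfolding sig_step_def by simp
  next
    case 3
    hence "arity a = 2" by auto
    hence "valid_sig i k P (x P (subtree t [0]))" "valid_sig i k P (x P (subtree t [1]))"
      using child by simp_all
    hence "valid_sig i k P (sig_combine P a (x P (subtree t [0])) (x P (subtree t [1])))"
      using sig_combine_cases[of P a "x P (subtree t [0])" "x P (subtree t [1])"] by metis
    thus ?thesis using sig_step_root_binary[where t = t and c = a, OF a 3] by simp
  qed
qed

section \<open>The least pre-fixed point\<close>

definition sig_prefixed :: "nat \<Rightarrow> nat \<Rightarrow> (player \<Rightarrow> tree \<Rightarrow> sig) \<Rightarrow> bool" where
  "sig_prefixed i k x \<longleftrightarrow>
     (\<forall>P t. well_formed i k t \<longrightarrow> valid_sig i k P (x P t) \<and> sig_le (sig_step k x P t) (x P t))"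

definition least_sig :: "nat \<Rightarrow> nat \<Rightarrow> player \<Rightarrow> tree \<Rightarrow> sig" where
  "least_sig i k P t = (if well_formed i k t then sig_Inf {x P t | x. sig_prefixed i k x} else None)"

lemma sig_prefixed_None: "sig_prefixed i k (\<lambda>P t. None)"
  unfolding sig_prefixed_def by simp

lemma least_sig_attained:
  assumes W: "well_formed i k t"
  shows "\<exists>x. sig_prefixed i k x \<and> least_sig i k P t = x P t"
    and "sig_prefixed i k x \<Longrightarrow> sig_le (least_sig i k P t) (x P t)"
proof -
  let ?Q = "{x P t | x. sig_prefixed i k x}"
  have ne: "?Q \<noteq> {}" using sig_prefixed_None by blast
  have supp: "\<forall>f. Some f \<in> ?Q \<longrightarrow> (\<forall>l\<ge>Suc k. f l = cord_zero)"
  proof (rule allI, rule impI)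
    fix f assume "Some f \<in> ?Q"
    hence "valid_sig i k P (Some f)" using W unfolding sig_prefixed_def by force
    thus "\<forall>l\<ge>Suc k. f l = cord_zero" using valid_sig_supported by blast
  qed
  have eq: "least_sig i k P t = sig_Inf ?Q" unfolding least_sig_def using W by simp
  show "\<exists>x. sig_prefixed i k x \<and> least_sig i k P t = x P t"
    using sig_Inf(1)[OF ne supp] unfolding eq by blast
  show "sig_prefixed i k x \<Longrightarrow> sig_le (least_sig i k P t) (x P t)"
    using sig_Inf(2)[OF ne supp, of "x P t"] unfolding eq by blast
qed

lemma sig_prefixed_least_sig: "sig_prefixed i k (least_sig i k)"
  unfolding sig_prefixed_def
proof (intro allI impI conjI)
  fix P t assume W: "well_formed i k t"
  obtain x where x: "sig_prefixed i k x" "least_sig i k P t = x P t" using least_sig_attained(1)[OF W] by blast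
  show "valid_sig i k P (least_sig i k P t)" using x W unfolding sig_prefixed_def by simp
  have "sig_le (sig_step k (least_sig i k) P t) (sig_step k x P t)"
    using sig_step_mono[where x = "least_sig i k" and y = x, OF least_sig_attained(2)[OF _ x(1)] W] .
  moreover have "sig_le (sig_step k x P t) (x P t)" using x(1) W unfolding sig_prefixed_def by blast
  ultimately show "sig_le (sig_step k (least_sig i k) P t) (least_sig i k P t)"
    using x(2) sig_le_trans by metis
qed

text \<open>Knaster--Tarski: applying the monotone operator to the least pre-fixed point gives another
  pre-fixed point, hence the two agree.\<close>

lemma least_sig_fixpoint:
  assumes W: "well_formed i k t" shows "sig_step k (least_sig i k) P t = least_sig i k P t"
proof -
  have pf: "\<And>P t. well_formed i k t \<Longrightarrow> sig_le (sig_step k (least_sig i k) P t) (least_sig i k P t)"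
    and v: "\<And>P t. well_formed i k t \<Longrightarrow> valid_sig i k P (least_sig i k P t)"
    using sig_prefixed_least_sig unfolding sig_prefixed_def by blast+
  have "sig_prefixed i k (sig_step k (least_sig i k))"
    unfolding sig_prefixed_def
  proof (intro allI impI conjI)
    fix P t assume "well_formed i k t"
    thus "valid_sig i k P (sig_step k (least_sig i k) P t)" using valid_sig_step[of i k "least_sig i k"] v by blast
    show "sig_le (sig_step k (sig_step k (least_sig i k)) P t) (sig_step k (least_sig i k) P t)"
      using sig_step_mono[where i = i and k = k and x = "sig_step k (least_sig i k)" and y = "least_sig i k"]
        pf \<open>well_formed i k t\<close> by blast
  qed
  hence "sig_le (least_sig i k P t) (sig_step k (least_sig i k) P t)" using least_sig_attained(2)[OF W] by blast
  thus ?thesis using pf[OF W] sig_le_antisym by blast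
qed

section \<open>Ranks of well-founded relations\<close>

definition wf_rank :: "('a::countable \<times> 'a) set \<Rightarrow> 'a \<Rightarrow> cord" where
  "wf_rank r = wfrec r (\<lambda>g u. cord_lub ((\<lambda>w. cord_succ (g w)) ` {w. (w, u) \<in> r}))"

lemma wf_rank_eq:
  assumes "wf r"
  shows "wf_rank r u = cord_lub ((\<lambda>w. cord_succ (wf_rank r w)) ` {w. (w, u) \<in> r})"
proof -
  have "wf_rank r u = cord_lub ((\<lambda>w. cord_succ (cut (wf_rank r) r u w)) ` {w. (w, u) \<in> r})"
    unfolding wf_rank_def by (subst wfrec[OF assms]) simp
  also have "(\<lambda>w. cord_succ (cut (wf_rank r) r u w)) ` {w. (w, u) \<in> r}
           = (\<lambda>w. cord_succ (wf_rank r w)) ` {w. (w, u) \<in> r}"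
    unfolding cut_def by auto
  finally show ?thesis .
qed

lemma wf_rank_succ_le:
  assumes "wf r" "(w, u) \<in> r" shows "cord_le (cord_succ (wf_rank r w)) (wf_rank r u)"
  using cord_lub[of "{w. (w, u) \<in> r}" "\<lambda>w. cord_succ (wf_rank r w)"] assms wf_rank_eq[OF assms(1), of u]
  by simp

lemma wf_rank_mono:
  assumes "wf r" "{w. (w, v) \<in> r} \<subseteq> {w. (w, u) \<in> r}" shows "cord_le (wf_rank r v) (wf_rank r u)"
proof -
  have "\<forall>w\<in>{w. (w, v) \<in> r}. cord_le (cord_succ (wf_rank r w)) (wf_rank r u)"
    using assms wf_rank_succ_le by blast
  thus ?thesis
    using cord_lub[of "{w. (w, v) \<in> r}" "\<lambda>w. cord_succ (wf_rank r w)"] wf_rank_eq[OF assms(1), of v]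
    by simp
qed

section \<open>Rank signatures of a winning strategy\<close>

text \<open>No \<open>\<sim>\<close> lies above a node of the strategy region, so there the players keep their roles.\<close>

definition strategy_region :: "tree \<Rightarrow> player \<Rightarrow> (nat list \<Rightarrow> nat) \<Rightarrow> nat list \<Rightarrow> bool" where
  "strategy_region t P s u \<longleftrightarrow>
     t u \<noteq> None \<and> (\<forall>m<length u. t (take m u) \<noteq> Some Sim) \<and> consistent_path t P s u"

definition prio_at_least :: "tree \<Rightarrow> nat \<Rightarrow> nat list \<Rightarrow> bool" where
  "prio_at_least t j v \<longleftrightarrow> t v \<noteq> Some Sim \<and> (\<forall>l. t v = Some (Pr l) \<longrightarrow> j \<le> l)"

text \<open>For a \<open>P\<close>-losing \<open>j\<close> a winning strategy makes this relation well-founded; its ranks are the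
  coordinates of the signatures.\<close>

definition visits_prio_rel :: "tree \<Rightarrow> player \<Rightarrow> (nat list \<Rightarrow> nat) \<Rightarrow> nat \<Rightarrow> (nat list \<times> nat list) set" where
  "visits_prio_rel t P s j = {(w, u). strategy_region t P s w \<and> (\<exists>d. d \<noteq> [] \<and> w = u @ d) \<and>
      (\<forall>m. length u \<le> m \<and> m < length w \<longrightarrow> prio_at_least t j (take m w)) \<and>
      (\<exists>m. length u \<le> m \<and> m < length w \<and> t (take m w) = Some (Pr j))}"

lemma strategy_region_Nil: "t [] \<noteq> None \<Longrightarrow> strategy_region t P s []"
  unfolding strategy_region_def consistent_path_def by simp

lemma sim_count_strategy_region: "strategy_region t P s u \<Longrightarrow> sim_count t u = 0"
  unfolding strategy_region_def sim_count_def by auto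

lemma controls_strategy_region: "strategy_region t P s u \<Longrightarrow> controls t P u \<longleftrightarrow> t u = Some (cP P)"
  unfolding controls_def switched_iff_odd_sim_count using sim_count_strategy_region by simp

lemma strategy_region_child:
  assumes R: "strategy_region t P s u" and a: "t u = Some a" "a \<noteq> Sim" and n: "t (u @ [n]) \<noteq> None"
    and c: "a = cP P \<Longrightarrow> n = s u"
  shows "strategy_region t P s (u @ [n])"
  unfolding strategy_region_def consistent_path_def
proof (intro conjI allI impI)
  fix m assume m: "m < length (u @ [n])"
  show "t (take m (u @ [n])) \<noteq> Some Sim"
    using R a m unfolding strategy_region_def by (cases "m < length u") auto
  assume cm: "controls t P (take m (u @ [n]))"
  show "(u @ [n]) ! m = s (take m (u @ [n]))"
  proof (cases "m < length u")
    case True thus ?thesis using R cm unfolding strategy_region_def consistent_path_def by (simp add: nth_append)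
  next
    case False
    hence "m = length u" using m by simp
    thus ?thesis using c cm controls_strategy_region[OF R] a by simp
  qed
qed (rule n)

lemma visits_prio_rel_parent:
  assumes ok: "prio_at_least t j u" and W: "(w, u @ [n]) \<in> visits_prio_rel t P s j"
  shows "(w, u) \<in> visits_prio_rel t P s j"
proof -
  obtain d where d: "d \<noteq> []" "w = (u @ [n]) @ d" using W unfolding visits_prio_rel_def by blast
  have "prio_at_least t j (take m w)" if "length u \<le> m" "m < length w" for m
    using that ok d W unfolding visits_prio_rel_def by (cases "m = length u") auto
  moreover have "\<exists>m. length u \<le> m \<and> m < length w \<and> t (take m w) = Some (Pr j)"
    using W unfolding visits_prio_rel_def by (auto intro: Suc_leD)
  ultimately show ?thesis using W d unfolding visits_prio_rel_def by auto
qed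

lemma visits_prio_rel_child:
  assumes "strategy_region t P s (u @ [n])" and "t u = Some (Pr j)"
  shows "(u @ [n], u) \<in> visits_prio_rel t P s j"
  using assms unfolding visits_prio_rel_def prio_at_least_def
  by (auto intro!: exI[of _ "length u"] exI[of _ "[n]"] simp: less_Suc_eq)

lemma append_chain_limit:
  fixes f :: "nat \<Rightarrow> nat list"
  assumes grow: "\<And>n. \<exists>d. d \<noteq> [] \<and> f (Suc n) = f n @ d"
  obtains b where "\<And>n. n \<le> length (f n)" and "\<And>n m. m \<le> length (f n) \<Longrightarrow> pref b m = take m (f n)"
proof
  have pre: "\<exists>d. f n' = f n @ d" if "n \<le> n'" for n n'
    using that
  proof (induction n' rule: dec_induct)
    case (step n')
    then obtain d d' where "f n' = f n @ d" "f (Suc n') = f n' @ d'" using grow by blast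
    thus ?case by auto
  qed simp
  show len: "n \<le> length (f n)" for n
  proof (induction n)
    case (Suc n)
    obtain d where "d \<noteq> []" "f (Suc n) = f n @ d" using grow by blast
    thus ?case using Suc by (cases d) auto
  qed simp
  have nth_eq: "f n' ! m = f n ! m" if nn': "n \<le> n'" and m: "m < length (f n)" for n n' m
  proof -
    obtain d where "f n' = f n @ d" using pre[OF nn'] by blast
    thus ?thesis using m by (simp add: nth_append)
  qed
  fix n m assume m: "m \<le> length (f n)"
  show "pref (\<lambda>m. f (Suc m) ! m) m = take m (f n)"
  proof (rule nth_equalityI)
    fix m' assume "m' < length (pref (\<lambda>m. f (Suc m) ! m) m)"
    hence m': "m' < m" by simp
    have "f (max n (Suc m')) ! m' = f (Suc m') ! m'"
      using nth_eq[of "Suc m'" "max n (Suc m')" m'] len[of "Suc m'"] by simp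
    moreover have "f (max n (Suc m')) ! m' = f n ! m'" using nth_eq[of n "max n (Suc m')" m'] m m' by simp
    ultimately show "pref (\<lambda>m. f (Suc m) ! m) m ! m' = take m (f n) ! m'" using m' by (simp add: pref_nth)
  qed (use m in simp)
qed

lemma min_inf_prio_eqI:
  assumes "infinite {m. t (pref b m) = Some (Pr j)}" and "\<And>l. l < j \<Longrightarrow> finite {m. t (pref b m) = Some (Pr l)}"
  shows "min_inf_prio k t b = j"
proof -
  have "(LEAST j'. infinite {m. t (pref b m) = Some (Pr j')}) = j"
  proof (rule Least_equality)
    fix y assume "infinite {m. t (pref b m) = Some (Pr y)}"
    thus "j \<le> y" using assms(2) by (meson not_le)
  qed (rule assms(1))
  thus ?thesis unfolding min_inf_prio_def using assms(1) by auto
qed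

lemma not_eventually_switched_if_no_Sim:
  assumes "\<And>m. t (pref b m) \<noteq> Some Sim" shows "\<not> eventually_switched t b"
proof -
  have "{m'. m' < m \<and> t (take m' (pref b m)) = Some Sim} = {}" for m
    using assms take_pref by (auto simp: less_imp_le)
  hence "\<not> switched t (pref b m)" for m unfolding switched_def by (simp only: length_pref) simp
  thus ?thesis unfolding eventually_switched_def by blast
qed

lemma visits_prio_rel_chain_prio_at_least:
  assumes f: "\<And>n. (f (Suc n), f n) \<in> visits_prio_rel t P s j"
    and m: "length (f 0) \<le> m" "m < length (f n)"
  shows "prio_at_least t j (take m (f n))"
  using m(2)
proof (induction n)
  case (Suc n)
  obtain d where "f (Suc n) = f n @ d" using f[of n] unfolding visits_prio_rel_def by blast
  thus ?case using Suc f[of n] m(1) unfolding visits_prio_rel_def by (cases "m < length (f n)") auto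
qed (use m(1) in simp)

text \<open>An infinite descending chain would be a play consistent with \<open>s\<close> that never meets \<open>\<sim>\<close> and in
  which, from some point on, \<open>j\<close> recurs and no smaller priority occurs: a loss for \<open>P\<close>.\<close>

lemma wf_visits_prio_rel:
  assumes T: "is_tree i k t" and W: "winning_strategy k t P s" and L: "losing P j"
  shows "wf (visits_prio_rel t P s j)"
proof (rule ccontr)
  let ?R = "visits_prio_rel t P s j"
  assume "\<not> wf ?R"
  then obtain f where f: "\<And>n. (f (Suc n), f n) \<in> ?R" using wf_iff_no_infinite_down_chain by blast
  then obtain b where len: "\<And>n. n \<le> length (f n)"
    and pb: "\<And>n m. m \<le> length (f n) \<Longrightarrow> pref b m = take m (f n)"
    using append_chain_limit[of f] unfolding visits_prio_rel_def by blast
  have region: "strategy_region t P s (f (Suc n))" for n using f[of n] unfolding visits_prio_rel_def by blast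
  have ltS: "m < length (f (Suc m))" for m using len[of "Suc m"] by simp
  have pbS: "pref b m = take m (f (Suc m))" for m using pb ltS less_imp_le by blast
  have "is_branch t b" unfolding is_branch_def
  proof
    fix m
    have "t (f (Suc m)) \<noteq> None" using region unfolding strategy_region_def by blast
    thus "t (pref b m) \<noteq> None"
      using pbS is_tree_prefix[OF T, of "take m (f (Suc m))" "drop m (f (Suc m))"] by simp
  qed
  moreover have "consistent t P s b" unfolding consistent_def
  proof (intro allI impI)
    fix m assume c: "controls t P (pref b m)"
    have "pref b (Suc m) = take (Suc m) (f (Suc m))" using pb ltS[of m] Suc_leI by blast
    hence "b m = f (Suc m) ! m" using pref_nth[of m "Suc m" b] ltS[of m] by simp
    moreover have "f (Suc m) ! m = s (take m (f (Suc m)))"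
      using region[of m] ltS[of m] c pbS[of m] unfolding strategy_region_def consistent_path_def by simp
    ultimately show "b m = s (pref b m)" using pbS by simp
  qed
  ultimately have "wins_play k t P b" using W unfolding winning_strategy_def by blast
  moreover have "\<not> eventually_switched t b"
    using region ltS pbS unfolding strategy_region_def
    by (intro not_eventually_switched_if_no_Sim) metis
  moreover have "min_inf_prio k t b = j"
  proof (rule min_inf_prio_eqI)
    show "infinite {m. t (pref b m) = Some (Pr j)}" unfolding infinite_nat_iff_unbounded_le
    proof
      fix n
      obtain m where m: "length (f n) \<le> m" "m < length (f (Suc n))" "t (take m (f (Suc n))) = Some (Pr j)"
        using f[of n] unfolding visits_prio_rel_def by blast
      moreover have "pref b m = take m (f (Suc n))" using pb m(2) by simp
      ultimately have "n \<le> m \<and> t (pref b m) = Some (Pr j)" using len[of n] by simp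
      thus "\<exists>m\<ge>n. m \<in> {m. t (pref b m) = Some (Pr j)}" by blast
    qed
    have ok: "prio_at_least t j (pref b m)" if "length (f 0) \<le> m" for m
      using visits_prio_rel_chain_prio_at_least[OF f that ltS] pbS by metis
    fix l assume "l < j"
    hence "{m. t (pref b m) = Some (Pr l)} \<subseteq> {..<length (f 0)}"
      using ok unfolding prio_at_least_def by (auto simp: not_le[symmetric])
    thus "finite {m. t (pref b m) = Some (Pr l)}" using finite_subset by blast
  qed
  ultimately show False using L unfolding wins_play_def losing_def by (cases P) auto
qed

definition rank_sig :: "nat \<Rightarrow> nat \<Rightarrow> tree \<Rightarrow> player \<Rightarrow> (nat list \<Rightarrow> nat) \<Rightarrow> nat list \<Rightarrow> nat \<Rightarrow> cord" where
  "rank_sig i k t P s u =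
     (\<lambda>l. if i \<le> l \<and> l \<le> k \<and> losing P l then wf_rank (visits_prio_rel t P s l) u else cord_zero)"

lemma valid_sig_rank_sig: "valid_sig i k P (Some (rank_sig i k t P s u))"
  unfolding valid_sig_def rank_sig_def by auto

text \<open>Several nodes may carry the same subtree; taking the infimum over them keeps the value below
  the rank signature of each.\<close>

definition strategy_sig ::
    "nat \<Rightarrow> nat \<Rightarrow> tree \<Rightarrow> player \<Rightarrow> (nat list \<Rightarrow> nat) \<Rightarrow> player \<Rightarrow> tree \<Rightarrow> sig" where
  "strategy_sig i k t P s P' t' = (if P' = P then
     sig_Inf {Some (rank_sig i k t P s u) | u. strategy_region t P s u \<and> subtree t u = t'} else None)"

context
  fixes i k t P s
  assumes T: "is_tree i k t" and S: "winning_strategy k t P s"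
begin

lemma rank_sig_child_le:
  assumes "prio_at_least t l u"
  shows "cord_le (rank_sig i k t P s (u @ [n]) l) (rank_sig i k t P s u l)"
proof (cases "i \<le> l \<and> l \<le> k \<and> losing P l")
  case True
  have "{w. (w, u @ [n]) \<in> visits_prio_rel t P s l} \<subseteq> {w. (w, u) \<in> visits_prio_rel t P s l}"
    using visits_prio_rel_parent[OF assms] by blast
  thus ?thesis using True wf_rank_mono[OF wf_visits_prio_rel[OF T S]] unfolding rank_sig_def by simp
next
  case False thus ?thesis unfolding rank_sig_def by auto
qed

lemma rank_sig_binary_child_le:
  assumes "t u = Some c" "c = C1 \<or> c = C2"
  shows "sig_le (Some (rank_sig i k t P s (u @ [n]))) (Some (rank_sig i k t P s u))"
proof -
  have "prio_at_least t l u" for l using assms unfolding prio_at_least_def by auto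
  thus ?thesis using rank_sig_child_le sig_le_if_pointwise_le by blast
qed

text \<open>Below a priority node the rank in its own coordinate drops, and the coordinates before it
  cannot grow.\<close>

lemma rank_sig_prio_child_le:
  assumes R: "strategy_region t P s (u @ [n])" and a: "t u = Some (Pr j)" and j: "i \<le> j" "j \<le> k"
  shows "sig_le (prio_update P j (Some (rank_sig i k t P s (u @ [n])))) (Some (rank_sig i k t P s u))"
proof -
  let ?v = "rank_sig i k t P s (u @ [n])" and ?w = "rank_sig i k t P s u"
  have lt: "cord_le (?v l) (?w l)" if "l < j" for l
    using rank_sig_child_le a that unfolding prio_at_least_def by auto
  show ?thesis
  proof (cases "losing P j")
    case True
    have "cord_le (cord_succ (?v j)) (?w j)"
      using wf_rank_succ_le[OF wf_visits_prio_rel[OF T S True] visits_prio_rel_child[OF R a]] j True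
      unfolding rank_sig_def by simp
    hence "\<forall>l. cord_le (incr_at j ?v l) (?w l)" using lt unfolding incr_at_def by auto
    thus ?thesis using True sig_le_if_pointwise_le unfolding prio_update_def by simp
  next
    case False
    have "\<forall>l. cord_le (reset_from j ?v l) (?w l)" using lt unfolding reset_from_def by auto
    thus ?thesis using False sig_le_if_pointwise_le unfolding prio_update_def by simp
  qed
qed

lemma strategy_sig_Inf:
  shows "strategy_region t P s u \<Longrightarrow> sig_le (strategy_sig i k t P s P (subtree t u)) (Some (rank_sig i k t P s u))"
    and "strategy_sig i k t P s P' t' \<noteq> None \<Longrightarrow>
         P' = P \<and> (\<exists>u. strategy_region t P s u \<and> subtree t u = t' \<and>
                      strategy_sig i k t P s P t' = Some (rank_sig i k t P s u))"
proof -
  let ?Q = "\<lambda>t'. {Some (rank_sig i k t P s u) | u. strategy_region t P s u \<and> subtree t u = t'}"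
  have supp: "\<forall>f. Some f \<in> ?Q t' \<longrightarrow> (\<forall>l\<ge>Suc k. f l = cord_zero)" for t'
    using valid_sig_rank_sig valid_sig_supported by blast
  show "strategy_region t P s u \<Longrightarrow> sig_le (strategy_sig i k t P s P (subtree t u)) (Some (rank_sig i k t P s u))"
    unfolding strategy_sig_def using sig_Inf(2)[OF _ supp] by auto
  assume "strategy_sig i k t P s P' t' \<noteq> None"
  moreover have "?Q t' \<noteq> {} \<Longrightarrow> sig_Inf (?Q t') \<in> ?Q t'" using sig_Inf(1)[OF _ supp] by blast
  ultimately show "P' = P \<and> (\<exists>u. strategy_region t P s u \<and> subtree t u = t' \<and>
                      strategy_sig i k t P s P t' = Some (rank_sig i k t P s u))"
    unfolding strategy_sig_def sig_Inf_def by (auto split: if_splits)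
qed

lemma wins_strategy_region:
  assumes R: "strategy_region t P s u" shows "wins k (subtree t u) P"
proof -
  have "t u \<noteq> None" "consistent_path t P s u" using R unfolding strategy_region_def by blast+
  moreover have "even (sim_count t u)" using sim_count_strategy_region[OF R] by simp
  ultimately show ?thesis using winning_strategy_subtree[OF T S] wins_iff_winning_strategy by blast
qed

lemma strategy_sig_child_le:
  assumes R: "strategy_region t P s u" and a: "t u = Some a" "a \<noteq> Sim"
    and n: "n < arity a" and own: "a = cP P \<Longrightarrow> n = s u"
  shows "sig_le (strategy_sig i k t P s P (subtree t (u @ [n]))) (Some (rank_sig i k t P s (u @ [n])))"
proof -
  have "t (u @ [n]) \<noteq> None" using is_tree_child_iff[OF T a(1)] n by blast
  hence "strategy_region t P s (u @ [n])" using strategy_region_child[OF R a _ own] by blast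
  thus ?thesis using strategy_sig_Inf(1) by simp
qed

lemma strategy_sig_prio_le:
  assumes R: "strategy_region t P s u" and a: "t u = Some (Pr j)"
  shows "sig_le (prio_update P j (strategy_sig i k t P s P (subtree t (u @ [0])))) (Some (rank_sig i k t P s u))"
proof -
  have j: "i \<le> j" "j \<le> k" using is_tree_in_alph[OF T a] unfolding in_alph_def by auto
  have "Pr j \<noteq> cP P" by (cases P) simp_all
  hence R0: "strategy_region t P s (u @ [0])"
    using strategy_region_child[OF R a] is_tree_child_iff[OF T a, of 0] by simp
  have "sig_le (prio_update P j (strategy_sig i k t P s P (subtree t (u @ [0]))))
               (prio_update P j (Some (rank_sig i k t P s (u @ [0]))))"
    using prio_update_mono strategy_sig_Inf(1)[OF R0] by simp
  thus ?thesis using rank_sig_prio_child_le[OF R0 a j] by (rule sig_le_trans)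
qed

lemma strategy_sig_own_le:
  assumes R: "strategy_region t P s u" and a: "t u = Some (cP P)"
  shows "sig_le (sig_min (strategy_sig i k t P s P (subtree t (u @ [0])))
                         (strategy_sig i k t P s P (subtree t (u @ [1]))))
                (Some (rank_sig i k t P s u))"
proof -
  let ?x = "\<lambda>n. strategy_sig i k t P s P (subtree t (u @ [n]))"
  have "controls t P u" using controls_strategy_region[OF R] a by simp
  hence "t (u @ [s u]) \<noteq> None" using S a unfolding winning_strategy_def strategy_def by blast
  hence n: "s u < 2" using is_tree_child_iff[OF T a, of "s u"] arity_cP by simp
  have "sig_le (sig_min (?x 0) (?x 1)) (?x (s u))"
  proof -
    consider "s u = 0" | "s u = 1" using n by linarith
    thus ?thesis using sig_min_le1 sig_min_le2 by cases simp_all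
  qed
  moreover have "sig_le (?x (s u)) (Some (rank_sig i k t P s (u @ [s u])))"
    using strategy_sig_child_le[OF R a cP_neq_Sim] n arity_cP by simp
  moreover have "sig_le (Some (rank_sig i k t P s (u @ [s u]))) (Some (rank_sig i k t P s u))"
    using rank_sig_binary_child_le[OF a cP_cases] .
  ultimately show ?thesis using sig_le_trans by blast
qed

lemma strategy_sig_opp_le:
  assumes R: "strategy_region t P s u" and a: "t u = Some (cP (opp P))"
  shows "sig_le (sig_max (strategy_sig i k t P s P (subtree t (u @ [0])))
                         (strategy_sig i k t P s P (subtree t (u @ [1]))))
                (Some (rank_sig i k t P s u))"
proof -
  let ?A = "Some (rank_sig i k t P s (u @ [0]))" and ?B = "Some (rank_sig i k t P s (u @ [1]))"
  have "cP (opp P) \<noteq> cP P" using cP_neq_opp[of P] by simp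
  hence "sig_le (strategy_sig i k t P s P (subtree t (u @ [n]))) (Some (rank_sig i k t P s (u @ [n])))"
    if "n < 2" for n
    using strategy_sig_child_le[OF R a cP_neq_Sim, of n] that arity_cP by simp
  hence "sig_le (sig_max (strategy_sig i k t P s P (subtree t (u @ [0])))
                         (strategy_sig i k t P s P (subtree t (u @ [1])))) (sig_max ?A ?B)"
    by (intro sig_max_mono) simp_all
  moreover have "sig_le (sig_max ?A ?B) (Some (rank_sig i k t P s u))"
  proof -
    have "sig_le ?A (Some (rank_sig i k t P s u))" "sig_le ?B (Some (rank_sig i k t P s u))"
      using rank_sig_binary_child_le[OF a cP_cases, of 0]
        rank_sig_binary_child_le[OF a cP_cases, of 1] by simp_all
    thus ?thesis using sig_max_cases[of ?A ?B] by (elim disjE) simp_all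
  qed
  ultimately show ?thesis by (rule sig_le_trans)
qed

lemma sig_step_strategy_sig_le:
  assumes R: "strategy_region t P s u"
  shows "sig_le (sig_step k (strategy_sig i k t P s) P (subtree t u)) (Some (rank_sig i k t P s u))"
proof -
  obtain a where a: "t u = Some a" using R unfolding strategy_region_def by blast
  have root: "subtree t u [] = Some a" using a by (simp add: subtree_def)
  have W: "wins k (subtree t u) P" by (rule wins_strategy_region[OF R])
  consider "a = Sim" | j where "a = Pr j" | "a = cP P" | "a = cP (opp P)"
    using binary_label_cases[of a P] by (cases a) auto
  thus ?thesis
  proof cases
    case 1
    have "sig_le (Some zero_sig) (Some (rank_sig i k t P s u))"
      by (rule sig_le_if_pointwise_le) (simp add: zero_sig_def)
    thus ?thesis using W root 1 unfolding sig_step_def by simp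
  next
    case (2 j)
    thus ?thesis using W root strategy_sig_prio_le[OF R a[unfolded 2]] unfolding sig_step_def by simp
  next
    case 3
    thus ?thesis using W strategy_sig_own_le[OF R a[unfolded 3]]
      sig_step_root_binary[where t = "subtree t u", OF root[unfolded 3] cP_cases] by simp
  next
    case 4
    thus ?thesis using W strategy_sig_opp_le[OF R a[unfolded 4]]
      sig_step_root_binary[where t = "subtree t u", OF root[unfolded 4] cP_cases] by simp
  qed
qed

lemma sig_prefixed_strategy_sig: "sig_prefixed i k (strategy_sig i k t P s)"
  unfolding sig_prefixed_def
proof (intro allI impI)
  fix P' t' assume "well_formed i k t'"
  show "valid_sig i k P' (strategy_sig i k t P s P' t') \<and>
        sig_le (sig_step k (strategy_sig i k t P s) P' t') (strategy_sig i k t P s P' t')"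
  proof (cases "strategy_sig i k t P s P' t' = None")
    case False
    then obtain u where u: "P' = P" "strategy_region t P s u" "subtree t u = t'"
      and eq: "strategy_sig i k t P s P t' = Some (rank_sig i k t P s u)"
      using strategy_sig_Inf(2) by blast
    have "sig_le (sig_step k (strategy_sig i k t P s) P t') (Some (rank_sig i k t P s u))"
      using sig_step_strategy_sig_le[OF u(2)] u(3) by simp
    thus ?thesis using u(1) eq valid_sig_rank_sig by simp
  qed simp
qed

lemma strategy_sig_root: "strategy_sig i k t P s P t \<noteq> None"
proof -
  have "strategy_region t P s []" using strategy_region_Nil is_tree_root[OF T] by blast
  hence "sig_le (strategy_sig i k t P s P (subtree t [])) (Some (rank_sig i k t P s []))"
    by (rule strategy_sig_Inf(1))
  thus ?thesis by (cases "strategy_sig i k t P s P t") auto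
qed

end

lemma least_sig_None_iff:
  assumes W: "well_formed i k t" shows "least_sig i k P t = None \<longleftrightarrow> \<not> wins k t P"
proof
  assume "least_sig i k P t = None"
  show "\<not> wins k t P"
  proof
    assume "wins k t P"
    then obtain s where S: "winning_strategy k t P s" using wins_iff_winning_strategy by blast
    have T: "is_tree i k t" using W unfolding well_formed_def by blast
    have "sig_le (least_sig i k P t) (strategy_sig i k t P s P t)"
      using least_sig_attained(2)[OF W sig_prefixed_strategy_sig[OF T S]] .
    thus False using \<open>least_sig i k P t = None\<close> strategy_sig_root[OF T S]
      by (cases "strategy_sig i k t P s P t") auto
  qed
next
  assume "\<not> wins k t P"
  have "least_sig i k P t = sig_step k (least_sig i k) P t" using least_sig_fixpoint[OF W] by simp
  thus "least_sig i k P t = None" using \<open>\<not> wins k t P\<close> unfolding sig_step_def by simp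
qed

lemma least_sig_prio:
  assumes W: "well_formed i k t" and j: "i \<le> j" "j \<le> k" and \<theta>: "least_sig i k P t = Some \<theta>"
  shows "least_sig i k P (unary (Pr j) t) = prio_update P j (Some \<theta>)"
proof -
  have WT: "well_formed i k (unary (Pr j) t)" using well_formed_unary[OF W] j by (simp add: in_alph_def)
  have "wins k t P" using \<theta> least_sig_None_iff[OF W, of P] by auto
  hence "wins k (unary (Pr j) t) P" using wins_unary_Pr_iff W j unfolding well_formed_def by blast
  thus ?thesis using least_sig_fixpoint[OF WT] sig_step_unary \<theta> by metis
qed

lemma least_sig_binary:
  assumes L: "well_formed i k l" and R: "well_formed i k r" and c: "c = cP P \<or> c = cP (opp P)"
  shows "least_sig i k P (binary c l r) = sig_combine P c (least_sig i k P l) (least_sig i k P r)"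
proof -
  have WT: "well_formed i k (binary c l r)" using well_formed_binary[OF L R] c in_alph_cP arity_cP by blast
  have wins_iff: "wins k (binary c l r) P \<longleftrightarrow>
      (if c = cP P then wins k l P \<or> wins k r P else wins k l P \<and> wins k r P)"
    using c wins_binary_own_iff wins_binary_opp_iff cP_neq_opp[of P] L R unfolding well_formed_def by metis
  show ?thesis
  proof (cases "wins k (binary c l r) P")
    case True
    thus ?thesis using least_sig_fixpoint[OF WT] sig_step_binary c cP_cases by metis
  next
    case False
    hence "least_sig i k P (binary c l r) = None" using least_sig_None_iff[OF WT] by blast
    moreover have "sig_combine P c (least_sig i k P l) (least_sig i k P r) = None"
      using False wins_iff least_sig_None_iff[OF L, of P] least_sig_None_iff[OF R, of P]
      unfolding sig_combine_def by (auto split: if_splits)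
    ultimately show ?thesis by simp
  qed
qed

lemma sig_conditions_least_sig: "sig_conditions i k (least_sig i k)"
  unfolding sig_conditions_def
proof (intro conjI allI impI)
  fix P t assume W: "well_formed i k t"
  show "valid_sig i k P (least_sig i k P t)" using W sig_prefixed_least_sig unfolding sig_prefixed_def by blast
  show "least_sig i k P t = None \<longleftrightarrow> \<not> wins k t P" using least_sig_None_iff[OF W] .
  assume "wins k (unary Sim t) P"
  moreover have "well_formed i k (unary Sim t)" using well_formed_unary[OF W] by (simp add: in_alph_def)
  ultimately show "least_sig i k P (unary Sim t) = Some zero_sig"
    using least_sig_fixpoint[of i k "unary Sim t" P] unfolding sig_step_def by auto
next
  fix P t j \<theta> assume "well_formed i k t" "i \<le> j" "j \<le> k" "least_sig i k P t = Some \<theta>"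
  thus "\<not> losing P j \<Longrightarrow> least_sig i k P (unary (Pr j) t) = Some (reset_from j \<theta>)"
    and "losing P j \<Longrightarrow> least_sig i k P (unary (Pr j) t) = Some (incr_at j \<theta>)"
    using least_sig_prio unfolding prio_update_def by simp_all
next
  fix P l r assume "well_formed i k l" "well_formed i k r"
  thus "least_sig i k P (binary (cP P) l r) = sig_min (least_sig i k P l) (least_sig i k P r)"
    and "least_sig i k P (binary (cP (opp P)) l r) = sig_max (least_sig i k P l) (least_sig i k P r)"
    using least_sig_binary by simp_all
qed

lemma sig_conditionsD:
  assumes C: "sig_conditions i k \<sigma>"
  shows "well_formed i k t \<Longrightarrow> \<sigma> P t = None \<longleftrightarrow> \<not> wins k t P"
    and "well_formed i k t \<Longrightarrow> wins k (unary Sim t) P \<Longrightarrow> \<sigma> P (unary Sim t) = Some zero_sig"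
    and "well_formed i k t \<Longrightarrow> i \<le> j \<Longrightarrow> j \<le> k \<Longrightarrow> \<sigma> P t = Some \<theta> \<Longrightarrow>
         \<sigma> P (unary (Pr j) t) = prio_update P j (Some \<theta>)"
    and "well_formed i k l \<Longrightarrow> well_formed i k r \<Longrightarrow>
         \<sigma> P (binary (cP P) l r) = sig_min (\<sigma> P l) (\<sigma> P r)"
    and "well_formed i k l \<Longrightarrow> well_formed i k r \<Longrightarrow>
         \<sigma> P (binary (cP (opp P)) l r) = sig_max (\<sigma> P l) (\<sigma> P r)"
  using C unfolding sig_conditions_def prio_update_def by simp_all

lemma sig_step_eq_if_sig_conditions:
  assumes C: "sig_conditions i k \<sigma>" and W: "well_formed i k t"
  shows "sig_step k \<sigma> P t = \<sigma> P t"
proof (cases "wins k t P")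
  case False
  thus ?thesis using sig_conditionsD(1)[OF C W, of P] unfolding sig_step_def by simp
next
  case win: True
  have T: "is_tree i k t" using W unfolding well_formed_def by blast
  obtain a where a: "t [] = Some a" using is_tree_root[OF T] by blast
  have W0: "well_formed i k (subtree t [0])" using well_formed_child[OF W a] by (cases a) auto
  consider "a = Sim" | j where "a = Pr j" | "a = cP P" | "a = cP (opp P)"
    using binary_label_cases[of a P] by (cases a) auto
  thus ?thesis
  proof cases
    case 1
    have "unary Sim (subtree t [0]) = t" using unary_subtree_eq[OF T a] 1 by simp
    thus ?thesis using sig_conditionsD(2)[OF C W0, of P] win a 1 unfolding sig_step_def by simp
  next
    case (2 j)
    have t: "unary (Pr j) (subtree t [0]) = t" using unary_subtree_eq[OF T a] 2 by simp
    have j: "i \<le> j" "j \<le> k" using is_tree_in_alph[OF T a] 2 unfolding in_alph_def by auto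
    have "wins k (subtree t [0]) P"
      using win wins_unary_Pr_iff[OF _ j, of "subtree t [0]"] W0 unfolding t well_formed_def by blast
    then obtain \<theta> where \<theta>: "\<sigma> P (subtree t [0]) = Some \<theta>" using sig_conditionsD(1)[OF C W0] by blast
    thus ?thesis using sig_conditionsD(3)[OF C W0 j \<theta>] win a 2 unfolding t sig_step_def by simp
  next
    case 3
    have t: "binary (cP P) (subtree t [0]) (subtree t [1]) = t"
      using binary_subtree_eq[OF T a] 3 arity_cP by simp
    have W1: "well_formed i k (subtree t [1])" using well_formed_child[OF W a] 3 arity_cP by simp
    show ?thesis using sig_conditionsD(4)[OF C W0 W1, of P] sig_step_root_binary[where t = t, OF a[unfolded 3] cP_cases] win
      unfolding t by simp
  next
    case 4
    have t: "binary (cP (opp P)) (subtree t [0]) (subtree t [1]) = t"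
      using binary_subtree_eq[OF T a] 4 arity_cP by simp
    have W1: "well_formed i k (subtree t [1])" using well_formed_child[OF W a] 4 arity_cP by simp
    show ?thesis using sig_conditionsD(5)[OF C W0 W1, of P] sig_step_root_binary[where t = t, OF a[unfolded 4] cP_cases] win
      unfolding t by simp
  qed
qed

lemma sig_prefixed_if_sig_conditions:
  assumes "sig_conditions i k \<sigma>" shows "sig_prefixed i k \<sigma>"
  unfolding sig_prefixed_def
proof (intro allI impI conjI)
  fix P t assume "well_formed i k t"
  thus "valid_sig i k P (\<sigma> P t)" using assms unfolding sig_conditions_def by blast
  show "sig_le (sig_step k \<sigma> P t) (\<sigma> P t)"
    using sig_step_eq_if_sig_conditions[OF assms \<open>well_formed i k t\<close>] by simp
qed

lemma pointwise_minimal_least_sig: "pointwise_minimal i k (least_sig i k)"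
  unfolding pointwise_minimal_def
proof (intro conjI allI impI)
  fix \<sigma> P t assume "sig_conditions i k \<sigma>" "well_formed i k t"
  thus "sig_le (least_sig i k P t) (\<sigma> P t)"
    using least_sig_attained(2) sig_prefixed_if_sig_conditions by blast
qed (rule sig_conditions_least_sig)

theorem mainTheorem6:
  fixes i k :: nat
  assumes "i < k"
  shows "\<exists>\<sigma>. pointwise_minimal i k \<sigma> \<and>
           (\<forall>\<sigma>'. pointwise_minimal i k \<sigma>' \<longrightarrow>
              (\<forall>P t. well_formed i k t \<longrightarrow> \<sigma>' P t = \<sigma> P t))"
proof (intro exI conjI allI impI)
  show "pointwise_minimal i k (least_sig i k)" by (rule pointwise_minimal_least_sig)
  fix \<sigma>' P t assume m: "pointwise_minimal i k \<sigma>'" and W: "well_formed i k t"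
  have "sig_le (\<sigma>' P t) (least_sig i k P t)"
    using m sig_conditions_least_sig W unfolding pointwise_minimal_def by blast
  moreover have "sig_le (least_sig i k P t) (\<sigma>' P t)"
    using pointwise_minimal_least_sig m W unfolding pointwise_minimal_def by blast
  ultimately show "\<sigma>' P t = least_sig i k P t" by (rule sig_le_antisym)
qed

end
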